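(* Let $p\neq q$ be primes and $N=N_p\times N_q$ with $N_p\cong C_p\times C_p$ and $N_q\cong C_q\times C_q$. Let $K_p\le T_p\le\mathrm{Aut}(N_p)$ and $K_q\le T_q\le\mathrm{Aut}(N_q)$ with $T_p,T_q$ abelian, and let $f_p\in\mathcal{E}(\mathrm{Aut}(N_p),K_p,N_p)$, $f_q\in\mathcal{E}(\mathrm{Aut}(N_q),K_q,N_q)$. Assume: (1) there is $n=n_pn_q\in N$ ($n_p\in N_p$, $n_q\in N_q$) with $f_p(n_p)=f_q(n_q)\neq0$; (2) $f_p$ vanishes outside $n_p^{T_p}$ and $f_q$ vanishes outside $n_q^{T_q}$; (3) there is an isomorphism $\alpha:T_p/K_p\to T_q/K_q$ such that $f_p(n_p^{a})=f_q(n_q^{b})$ for every $a\in T_p$ and every $b\in T_q$ with $bK_q=\alpha(a^{-1}K_p)$. Regard $T_p\times T_q\le\mathrm{Aut}(N)$, let $r_p:T_p\times T_q\to T_p$, $r_q:T_p\times T_q\to T_q$ be the projections, $\pi_p:T_p\to T_p/K_p$, $\pi_q:T_q\to T_q/K_q$ the quotient maps, $\Gamma=\{\sigma\in T_p\times T_q:\alpha\pi_pr_p(\sigma)=\pi_qr_q(\sigma)\}$ and $G=N\rtimes\Gamma$, acting on $N$ by conjugation. Define $\varepsilon:N\to\mathbb{Z}$ by $\varepsilon(x)=0$ if $x_q\notin n_q^G$ and $\varepsilon(x)=f_p(x_p^g)$ if $n_q=x_q^g$ with $g\in G$. Then $\varepsilon$ is well defined, $f_p\in\mathcal{E}(G,\mathrm{C}_G(n_q),N_p)$,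 $f_q\in\mathcal{E}(G,\mathrm{C}_G(n_p),N_q)$, and also $\varepsilon(x)=0$ if $x_p\notin n_p^G$ and $\varepsilon(x)=f_q(x_q^g)$ if $n_p=x_p^g$ with $g\in G$.
   Context: $x_p,x_q$ denote the $p$-part and $q$-part of $x\in N$; $x^S$ the orbit of $x$ under a group $S$; $\mathrm{C}_G(y)$ the centralizer. Definition of $\mathcal{E}(G,H,A)$ (for a group $G$ acting on a finite abelian group $A$ and $H\le G$): the set of functions $f:A\to\mathbb{Z}$ constant on $H$-orbits such that (I) $\sum_{X\in\mathrm{Cl}_H(A)}f(X)=1$, where $\mathrm{Cl}_H(A)$ is the set of $H$-orbits; (II) $f$ vanishes outside a single local $G$-class of $A$ ($a,b$ locally $G$-conjugate iff $a_r,b_r$ are $G$-conjugate for every prime $r$); (III) $\sum_{c\in C}|\mathrm{C}_H(c)|f(c)\ge0$ for every coset $C$ of a minimal cocyclic subgroup of $A$ (a subgroup $L$ with $A/L$ cyclic, minimal with this property); (IV) $f(a)\ge -h_A[\mathrm{C}_H(a_{\pi_0}):\mathrm{C}_H(a)]$ for all $a$, where $\pi_0$ is the set of primes $r$ dividing $|A|$ with $A_r$ cyclic and $h_A=\frac{\sum_{X\in\pi^-}\prod_{r\in\pi}(r^{k_r-\Delta_X(r)}-1)}{\prod_{r\in\pi}(r-1)r^{k_r-1}}$ with $\pi$ the primes dividing $|A|$, $\pi^-$ the odd-cardinality subsets of $\pi$, $\Delta_X$ the characteristic function of $X$, $k_r$ the rank of the socle of $A_r$; (V) $f(a)<0$ for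 some $a$. Here $\mathrm{C}_H(c)$ is the stabilizer of $c$ in $H$. *)

theory Defs
  imports Complex_Main "HOL-Algebra.Algebra"
begin

definition pi_elem :: "('a, 'b) monoid_scheme \<Rightarrow> nat set \<Rightarrow> 'a \<Rightarrow> bool" where
  "pi_elem A P y \<longleftrightarrow> (\<exists>m::nat. m > 0 \<and> (\<forall>q. Factorial_Ring.prime q \<longrightarrow> q dvd m \<longrightarrow> q \<in> P)
                         \<and> y [^]\<^bsub>A\<^esub> m = \<one>\<^bsub>A\<^esub>)"

definition pi_part :: "('a, 'b) monoid_scheme \<Rightarrow> nat set \<Rightarrow> 'a \<Rightarrow> 'a" where
  "pi_part A P a = (THE y. y \<in> carrier A \<and> pi_elem A P y \<and>
       (\<exists>z \<in> carrier A. pi_elem A (- P) z \<and> a = y \<otimes>\<^bsub>A\<^esub> z))"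

definition sylow_part :: "('a, 'b) monoid_scheme \<Rightarrow> nat \<Rightarrow> 'a set" where
  "sylow_part A r = {a \<in> carrier A. pi_elem A {r} a}"

definition socle_rank :: "('a, 'b) monoid_scheme \<Rightarrow> nat \<Rightarrow> nat" where
  "socle_rank A r = (THE k. card {a \<in> carrier A. a [^]\<^bsub>A\<^esub> r = \<one>\<^bsub>A\<^esub>} = r ^ k)"

definition primes_of :: "('a, 'b) monoid_scheme \<Rightarrow> nat set" where
  "primes_of A = {r. Factorial_Ring.prime r \<and> r dvd card (carrier A)}"

definition pi0 :: "('a, 'b) monoid_scheme \<Rightarrow> nat set" where
  "pi0 A = {r \<in> primes_of A. cyclic_group (A\<lparr>carrier := sylow_part A r\<rparr>)}"

definition hA :: "('a, 'b) monoid_scheme \<Rightarrow> real" where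
  "hA A = (\<Sum>S \<in> {S. S \<subseteq> primes_of A \<and> odd (card S)}.
             \<Prod>r \<in> primes_of A. (real r ^ (socle_rank A r - (if r \<in> S then 1 else 0)) - 1))
          / (\<Prod>r \<in> primes_of A. (real r - 1) * real r ^ (socle_rank A r - 1))"

definition min_cocyclic :: "('a, 'b) monoid_scheme \<Rightarrow> 'a set \<Rightarrow> bool" where
  "min_cocyclic A L \<longleftrightarrow> subgroup L A \<and> cyclic_group (A Mod L) \<and>
     \<not> (\<exists>L'. subgroup L' A \<and> cyclic_group (A Mod L') \<and> L' \<subset> L)"

text \<open>An action is given by a map act with act a g = a^g.\<close>
definition orbit_in :: "('a \<Rightarrow> 'g \<Rightarrow> 'a) \<Rightarrow> 'g set \<Rightarrow> 'a \<Rightarrow> 'a set" where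
  "orbit_in act H a = {act a h | h. h \<in> H}"

definition stab_in :: "('a \<Rightarrow> 'g \<Rightarrow> 'a) \<Rightarrow> 'g set \<Rightarrow> 'a \<Rightarrow> 'g set" where
  "stab_in act H a = {h \<in> H. act a h = a}"

definition loc_conj :: "('g, 'c) monoid_scheme \<Rightarrow> ('a \<Rightarrow> 'g \<Rightarrow> 'a) \<Rightarrow> ('a, 'b) monoid_scheme
                        \<Rightarrow> 'a \<Rightarrow> 'a \<Rightarrow> bool" where
  "loc_conj G act A a b \<longleftrightarrow>
     (\<forall>r. Factorial_Ring.prime r \<longrightarrow> (\<exists>g \<in> carrier G. act (pi_part A {r} a) g = pi_part A {r} b))"

definition in_E :: "('g, 'c) monoid_scheme \<Rightarrow> ('a \<Rightarrow> 'g \<Rightarrow> 'a) \<Rightarrow> 'g set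
                     \<Rightarrow> ('a, 'b) monoid_scheme \<Rightarrow> ('a \<Rightarrow> int) \<Rightarrow> bool" where
  "in_E G act H A f \<longleftrightarrow>
     (\<forall>a \<in> carrier A. \<forall>h \<in> H. f (act a h) = f a) \<and>
     (\<Sum>Orb \<in> orbit_in act H ` carrier A. f (SOME x. x \<in> Orb)) = 1 \<and>
     (\<exists>c \<in> carrier A. \<forall>a \<in> carrier A. f a \<noteq> 0 \<longrightarrow> loc_conj G act A c a) \<and>
     (\<forall>L. min_cocyclic A L \<longrightarrow> (\<forall>C \<in> rcosets\<^bsub>A\<^esub> L.
          (\<Sum>c \<in> C. int (card (stab_in act H c)) * f c) \<ge> 0)) \<and>
     (\<forall>a \<in> carrier A. real_of_int (f a) \<ge>
          - hA A * (real (card (stab_in act H (pi_part A (pi0 A) a))) / real (card (stab_in act H a)))) \<and>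
     (\<exists>a \<in> carrier A. f a < 0)"

definition sdprod :: "('a, 'b) monoid_scheme \<Rightarrow> ('g, 'c) monoid_scheme \<Rightarrow> ('g \<Rightarrow> 'a \<Rightarrow> 'a)
                      \<Rightarrow> ('a \<times> 'g) monoid" where
  "sdprod N H phi = \<lparr>carrier = carrier N \<times> carrier H,
     monoid.mult = (\<lambda>(m, s) (m', s'). (m \<otimes>\<^bsub>N\<^esub> phi s m', s \<otimes>\<^bsub>H\<^esub> s')),
     one = (\<one>\<^bsub>N\<^esub>, \<one>\<^bsub>H\<^esub>)\<rparr>"

definition conj_sd :: "('a \<times> 'g) monoid \<Rightarrow> ('g, 'c) monoid_scheme \<Rightarrow> 'a \<Rightarrow> 'a \<times> 'g \<Rightarrow> 'a" where
  "conj_sd G H x g = fst (inv\<^bsub>G\<^esub> g \<otimes>\<^bsub>G\<^esub> (x, \<one>\<^bsub>H\<^esub>) \<otimes>\<^bsub>G\<^esub> g)"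

end

theory Submission
  imports Defs
begin

text \<open>
  The group Gamma is the fibre product of Tp -> Tp/Kp = Tq/Kq <- Tq, and G = N x| Gamma acts
  on Np and on Nq through the two projections of Gamma (the abelian group N acts trivially on
  itself). Compatibility of alpha says precisely that fp(np^g) = fq(nq^(g^-1)) for all g in G.
  Together with the vanishing of fp and fq off a single orbit, a pure group-action argument then
  shows that fp is invariant under C_G(nq) (and symmetrically), that epsilon is well defined,
  and that its two descriptions agree.

  Membership in E passes from (Aut Np, Kp) to (G, C_G(nq)) because both actions factor through
  the abelian group Tp: all points of the Tp-orbit carrying fp have the same stabilizer, so the
  weighted sums in (I) and (III) change only by a positive factor, (I) forces the ratio of the
  two orbit sizes of np to be 1, and (IV) reduces to orbit sizes because Cp x Cp is not cyclic,
  so all pi_0-parts are trivial.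
\<close>

section \<open>Elementary abelian groups of order p squared\<close>

lemma DirProd_nat_pow: "(g, h) [^]\<^bsub>G \<times>\<times> H\<^esub> (n::nat) = (g [^]\<^bsub>G\<^esub> n, h [^]\<^bsub>H\<^esub> n)"
  by (induction n) auto

lemma iso_Zp_Zp:
  assumes p: "Factorial_Ring.prime (p::nat)" and A: "group A"
    and iso: "A \<cong> integer_mod_group p \<times>\<times> integer_mod_group p"
  shows iso_Zp_Zp_comm: "comm_group A"
    and iso_Zp_Zp_exponent: "\<forall>x\<in>carrier A. x [^]\<^bsub>A\<^esub> p = \<one>\<^bsub>A\<^esub>"
    and iso_Zp_Zp_card: "card (carrier A) = p * p"
proof -
  let ?Z = "integer_mod_group p \<times>\<times> integer_mod_group p"
  have p0: "p > 0" using p prime_gt_0_nat by blast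
  have gZ: "group ?Z" by (simp add: DirProd_group)
  have "comm_group ?Z"
    by (rule group.group_comm_groupI[OF gZ]) (auto simp: add.commute)
  then show "comm_group A"
    using comm_group.iso_imp_comm_group group.iso_sym[OF A iso] A group.is_monoid by blast
  show "card (carrier A) = p * p"
    using iso_same_card[OF iso] p0 by (simp add: carrier_integer_mod_group card_cartesian_product)
  obtain h where h: "h \<in> iso A ?Z" using iso unfolding is_iso_def by auto
  then have hom: "h \<in> hom A ?Z" and inj: "inj_on h (carrier A)"
    by (auto simp: iso_def bij_betw_def)
  show "\<forall>x\<in>carrier A. x [^]\<^bsub>A\<^esub> p = \<one>\<^bsub>A\<^esub>"
  proof
    fix x assume x: "x \<in> carrier A"
    obtain u v where uv: "h x = (u, v)" by (cases "h x")
    have "h (x [^]\<^bsub>A\<^esub> p) = h x [^]\<^bsub>?Z\<^esub> p" using hom_nat_pow[OF hom x A gZ] .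
    also have "\<dots> = h \<one>\<^bsub>A\<^esub>" using p0 hom_one[OF hom A gZ] by (simp add: uv DirProd_nat_pow)
    finally show "x [^]\<^bsub>A\<^esub> p = \<one>\<^bsub>A\<^esub>"
      using inj x A by (meson group.is_monoid monoid.nat_pow_closed monoid.one_closed inj_onD)
  qed
qed

lemma not_cyclic_if_exponent_prime:
  assumes A: "group A" and p: "Factorial_Ring.prime (p::nat)"
    and exp: "\<forall>x\<in>carrier A. x [^]\<^bsub>A\<^esub> p = \<one>\<^bsub>A\<^esub>" and card: "card (carrier A) = p * p"
  shows "\<not> cyclic_group A"
proof
  interpret group A by (fact A)
  assume "cyclic_group A"
  then obtain x where x: "x \<in> carrier A" "subgroup_generated A {x} = A"
    unfolding cyclic_group_def by blast
  have "ord x = p * p" using cyclic_order_is_ord[OF x(1)] x(2) card by (simp add: order_def)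
  moreover have "ord x dvd p" using pow_eq_id x(1) exp by blast
  ultimately have "p * p \<le> p * 1" using p prime_gt_0_nat by (simp add: dvd_imp_le)
  then show False using prime_gt_1_nat[OF p] by simp
qed

lemma pi_elem_one: "group A \<Longrightarrow> pi_elem A P \<one>\<^bsub>A\<^esub>"
  unfolding pi_elem_def by (rule exI[of _ 1]) (auto simp: not_prime_unit group.is_monoid)

lemma pi_elem_if_pow_prime:
  assumes "Factorial_Ring.prime (p::nat)" "p \<in> P" "x [^]\<^bsub>A\<^esub> p = \<one>\<^bsub>A\<^esub>"
  shows "pi_elem A P x"
  unfolding pi_elem_def
  using assms prime_gt_0_nat primes_dvd_imp_eq by (intro exI[of _ p]) blast

lemma pi_elem_pow_prime_eq_one:
  assumes A: "group A" and p: "Factorial_Ring.prime (p::nat)" "p \<notin> P"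
    and y: "pi_elem A P y" "y \<in> carrier A" "y [^]\<^bsub>A\<^esub> p = \<one>\<^bsub>A\<^esub>"
  shows "y = \<one>\<^bsub>A\<^esub>"
proof -
  obtain m where m: "\<forall>r. Factorial_Ring.prime r \<longrightarrow> r dvd m \<longrightarrow> r \<in> P" "y [^]\<^bsub>A\<^esub> m = \<one>\<^bsub>A\<^esub>"
    using y(1) unfolding pi_elem_def by auto
  have "coprime p m" using m(1) p prime_imp_coprime by blast
  moreover have "group.ord A y dvd m" "group.ord A y dvd p"
    using group.pow_eq_id[OF A] y(2,3) m(2) by auto
  ultimately have "group.ord A y = 1" by (metis coprime_common_divisor_nat)
  then show ?thesis using group.ord_eq_1[OF A] y(2) by simp
qed

context
  fixes A :: "('a, 'b) monoid_scheme" (structure) and p :: nat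
  assumes A: "group A" and p: "Factorial_Ring.prime p" and exp: "\<forall>x\<in>carrier A. x [^]\<^bsub>A\<^esub> p = \<one>\<^bsub>A\<^esub>"
begin

lemma pi_part_exponent_prime_trivial:
  assumes "a \<in> carrier A" "p \<notin> P"
  shows "pi_part A P a = \<one>\<^bsub>A\<^esub>"
proof -
  interpret group A by (fact A)
  show ?thesis
    unfolding pi_part_def
  proof (rule the_equality)
    show "\<one> \<in> carrier A \<and> pi_elem A P \<one> \<and> (\<exists>z\<in>carrier A. pi_elem A (- P) z \<and> a = \<one> \<otimes> z)"
      using pi_elem_one[OF A] pi_elem_if_pow_prime[OF p, of "-P" A] assms exp by auto
  qed (use pi_elem_pow_prime_eq_one[OF A p assms(2)] exp in blast)
qed

lemma pi_part_exponent_prime_self: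
  assumes a: "a \<in> carrier A"
  shows "pi_part A {p} a = a"
proof -
  interpret group A by (fact A)
  show ?thesis
    unfolding pi_part_def
  proof (rule the_equality)
    show "a \<in> carrier A \<and> pi_elem A {p} a \<and> (\<exists>z\<in>carrier A. pi_elem A (- {p}) z \<and> a = a \<otimes> z)"
      using pi_elem_one[OF A] pi_elem_if_pow_prime[OF p, of "{p}" A] a exp
      by (auto intro!: bexI[of _ \<one>])
  next
    fix y assume "y \<in> carrier A \<and> pi_elem A {p} y \<and> (\<exists>z\<in>carrier A. pi_elem A (- {p}) z \<and> a = y \<otimes> z)"
    then obtain z where "y \<in> carrier A" "z \<in> carrier A" "pi_elem A (- {p}) z" "a = y \<otimes> z" by auto
    moreover have "z = \<one>" using pi_elem_pow_prime_eq_one[OF A p, of "- {p}" z] calculation exp by auto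
    ultimately show "y = a" by simp
  qed
qed

lemma prime_notin_pi0:
  assumes "card (carrier A) = p * p"
  shows "p \<notin> pi0 A"
proof
  assume "p \<in> pi0 A"
  moreover have "sylow_part A p = carrier A"
    unfolding sylow_part_def using pi_elem_if_pow_prime[OF p, of "{p}" A] exp by auto
  ultimately have "cyclic_group A" unfolding pi0_def by auto
  then show False using not_cyclic_if_exponent_prime[OF A p exp assms] by simp
qed

end

lemma hA_nonneg: "hA A \<ge> 0"
proof -
  have "real r \<ge> 1" if "r \<in> primes_of A" for r
    using that prime_ge_1_nat unfolding primes_of_def by auto
  then show ?thesis
    unfolding hA_def by (intro divide_nonneg_nonneg sum_nonneg prod_nonneg) (auto intro: one_le_power)
qed

section \<open>Actions given pointwise\<close>

definition acts_on :: "('g, 'c) monoid_scheme \<Rightarrow> ('x \<Rightarrow> 'g \<Rightarrow> 'x) \<Rightarrow> 'x set \<Rightarrow> bool" where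
  "acts_on G act S \<longleftrightarrow> (\<forall>x\<in>S. \<forall>g\<in>carrier G. act x g \<in> S) \<and> (\<forall>x\<in>S. act x \<one>\<^bsub>G\<^esub> = x) \<and>
     (\<forall>x\<in>S. \<forall>g\<in>carrier G. \<forall>h\<in>carrier G. act x (g \<otimes>\<^bsub>G\<^esub> h) = act (act x h) g)"

lemma acts_onD:
  assumes "acts_on G act S" "x \<in> S"
  shows acts_on_closed: "g \<in> carrier G \<Longrightarrow> act x g \<in> S"
    and acts_on_one: "act x \<one>\<^bsub>G\<^esub> = x"
    and acts_on_mult: "g \<in> carrier G \<Longrightarrow> h \<in> carrier G \<Longrightarrow> act x (g \<otimes>\<^bsub>G\<^esub> h) = act (act x h) g"
  using assms unfolding acts_on_def by blast+

lemma acts_on_subgroup: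
  assumes "acts_on G act S" "subgroup H G"
  shows "acts_on (G\<lparr>carrier := H\<rparr>) act S"
  using assms(1) subgroup.subset[OF assms(2)] unfolding acts_on_def by (simp add: subset_iff)

lemma acts_on_cong:
  assumes G: "group G" and "acts_on G act S" "\<And>x g. x \<in> S \<Longrightarrow> g \<in> carrier G \<Longrightarrow> act' x g = act x g"
  shows "acts_on G act' S"
  using assms(2,3) group.is_monoid[OF G] unfolding acts_on_def by (simp add: monoid.one_closed monoid.m_closed)

context
  fixes G (structure) and act :: "'x \<Rightarrow> 'g \<Rightarrow> 'x" and S
  assumes G: "group G" and act: "acts_on G act S"
begin

lemma acts_on_inv_cancel:
  assumes x: "x \<in> S" and g: "g \<in> carrier G"
  shows "act (act x g) (inv g) = x" and "act (act x (inv g)) g = x"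
proof -
  interpret group G by (fact G)
  show "act (act x g) (inv g) = x"
    using acts_on_mult[OF act x, of "inv g" g] acts_on_one[OF act x] g by simp
  show "act (act x (inv g)) g = x"
    using acts_on_mult[OF act x, of g "inv g"] acts_on_one[OF act x] g by simp
qed

lemma acts_on_orbit_in_iff:
  assumes x: "x \<in> S" and g: "g \<in> carrier G" and y: "y \<in> S"
  shows "act x g \<in> orbit_in act (carrier G) y \<longleftrightarrow> x \<in> orbit_in act (carrier G) y"
proof
  interpret group G by (fact G)
  assume "act x g \<in> orbit_in act (carrier G) y"
  then obtain h where h: "h \<in> carrier G" "act x g = act y h" unfolding orbit_in_def by blast
  have "x = act (act x g) (inv g)" using acts_on_inv_cancel(1)[OF x g] by simp
  also have "\<dots> = act y (inv g \<otimes> h)" using h acts_on_mult[OF act y] g by simp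
  finally show "x \<in> orbit_in act (carrier G) y"
    unfolding orbit_in_def using h(1) g by blast
next
  interpret group G by (fact G)
  assume "x \<in> orbit_in act (carrier G) y"
  then obtain h where h: "h \<in> carrier G" "x = act y h" unfolding orbit_in_def by blast
  then have "act x g = act y (g \<otimes> h)" using acts_on_mult[OF act y] g by simp
  then show "act x g \<in> orbit_in act (carrier G) y"
    unfolding orbit_in_def using h(1) g by blast
qed

lemma stab_in_subgroup:
  assumes y: "y \<in> S"
  shows "subgroup (stab_in act (carrier G) y) G"
proof -
  interpret group G by (fact G)
  show ?thesis
  proof (rule subgroupI)
    show "stab_in act (carrier G) y \<noteq> {}"
      using acts_on_one[OF act y] unfolding stab_in_def by blast
  next
    fix g assume "g \<in> stab_in act (carrier G) y"
    then show "inv g \<in> stab_in act (carrier G) y"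
      using acts_on_inv_cancel(1)[OF y] unfolding stab_in_def by fastforce
  next
    fix g h assume "g \<in> stab_in act (carrier G) y" "h \<in> stab_in act (carrier G) y"
    then show "g \<otimes> h \<in> stab_in act (carrier G) y"
      using acts_on_mult[OF act y] unfolding stab_in_def by simp
  qed (auto simp: stab_in_def)
qed

lemma group_action_of_acts_on: "group_action G S (\<lambda>g. \<lambda>x\<in>S. act x g)"
proof -
  have bij: "(\<lambda>x\<in>S. act x g) \<in> Bij S" if g: "g \<in> carrier G" for g
    unfolding Bij_def bij_betw_def
  proof (intro CollectI IntI conjI)
    show "inj_on (\<lambda>x\<in>S. act x g) S"
      by (rule inj_on_inverseI[where g = "\<lambda>x. act x (inv g)"]) (use acts_on_inv_cancel g in auto)
    show "(\<lambda>x\<in>S. act x g) ` S = S"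
    proof
      show "(\<lambda>x\<in>S. act x g) ` S \<subseteq> S" using acts_on_closed[OF act _ g] by auto
      show "S \<subseteq> (\<lambda>x\<in>S. act x g) ` S"
      proof
        fix x assume x: "x \<in> S"
        have "act x (inv g) \<in> S" using acts_on_closed[OF act x group.inv_closed[OF G g]] .
        then show "x \<in> (\<lambda>x\<in>S. act x g) ` S"
          using acts_on_inv_cancel(2)[OF x g] by (intro image_eqI[where x = "act x (inv g)"]) auto
      qed
    qed
  qed simp
  have "(\<lambda>x\<in>S. act x (g \<otimes> h)) = compose S (\<lambda>x\<in>S. act x g) (\<lambda>x\<in>S. act x h)"
    if "g \<in> carrier G" "h \<in> carrier G" for g h
    using that acts_on_mult[OF act] acts_on_closed[OF act] by (auto simp: compose_def)
  then show ?thesis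
    unfolding group_action_def group_hom_def group_hom_axioms_def hom_def
    using bij G group_BijGroup by (auto simp: BijGroup_def)
qed

lemma orbit_eq_orbit_in: "x \<in> S \<Longrightarrow> orbit G (\<lambda>g. \<lambda>x\<in>S. act x g) x = orbit_in act (carrier G) x"
  by (auto simp: orbit_def orbit_in_def)

lemma stabilizer_eq_stab_in: "x \<in> S \<Longrightarrow> stabilizer G (\<lambda>g. \<lambda>x\<in>S. act x g) x = stab_in act (carrier G) x"
  by (auto simp: stabilizer_def stab_in_def)

lemma card_orbit_in_mult_card_stab_in:
  assumes "finite (carrier G)" "x \<in> S"
  shows "card (orbit_in act (carrier G) x) * card (stab_in act (carrier G) x) = card (carrier G)"
  using group_action.orbit_stabilizer_theorem[OF group_action_of_acts_on assms(2)] assms(2)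
  by (simp add: orbit_eq_orbit_in stabilizer_eq_stab_in order_def)

lemma card_stab_in_pos:
  assumes "finite (carrier G)" "x \<in> S"
  shows "card (stab_in act (carrier G) x) > 0"
proof -
  have "\<one> \<in> stab_in act (carrier G) x"
    using acts_on_one[OF act assms(2)] group.is_monoid[OF G] monoid.one_closed unfolding stab_in_def by blast
  moreover have "finite (stab_in act (carrier G) x)"
    using assms(1) unfolding stab_in_def by simp
  ultimately show ?thesis using card_gt_0_iff by blast
qed

lemma sum_orbit_in_weighted:
  fixes f :: "'x \<Rightarrow> int"
  assumes fin: "finite (carrier G)" and y: "y \<in> S"
    and inv: "\<And>g x. g \<in> carrier G \<Longrightarrow> x \<in> S \<Longrightarrow> f (act x g) = f x"
  shows "(\<Sum>x\<in>orbit_in act (carrier G) y. int (card (stab_in act (carrier G) x)) * f x)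
         = int (card (carrier G)) * f y"
proof -
  interpret group_action G S "\<lambda>g. \<lambda>x\<in>S. act x g" by (rule group_action_of_acts_on)
  let ?Ob = "orbit_in act (carrier G) y"
  have "?Ob \<in> orbits G S (\<lambda>g. \<lambda>x\<in>S. act x g)"
    using y orbit_eq_orbit_in unfolding orbits_def by blast
  then have "(\<Sum>x\<in>?Ob. card (stabilizer G (\<lambda>g. \<lambda>x\<in>S. act x g) x)) = order G"
    by (rule card_stablizer_sum[OF fin])
  moreover have "?Ob \<subseteq> S" using y acts_on_closed[OF act] unfolding orbit_in_def by auto
  then have "(\<Sum>x\<in>?Ob. card (stab_in act (carrier G) x))
      = (\<Sum>x\<in>?Ob. card (stabilizer G (\<lambda>g. \<lambda>x\<in>S. act x g) x))"
    by (intro sum.cong) (auto simp: stabilizer_eq_stab_in)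
  ultimately have "(\<Sum>x\<in>?Ob. card (stab_in act (carrier G) x)) = card (carrier G)"
    by (simp add: order_def)
  moreover have "f x = f y" if "x \<in> ?Ob" for x using that y inv unfolding orbit_in_def by auto
  ultimately show ?thesis by (simp add: sum_distrib_right[symmetric] flip: of_nat_sum)
qed

lemma orbit_in_sum:
  fixes f :: "'x \<Rightarrow> int"
  assumes fin: "finite (carrier G)" "finite S" and inv: "\<And>g x. g \<in> carrier G \<Longrightarrow> x \<in> S \<Longrightarrow> f (act x g) = f x"
  shows "int (card (carrier G)) * (\<Sum>Ob \<in> orbit_in act (carrier G) ` S. f (SOME x. x \<in> Ob))
         = (\<Sum>x\<in>S. int (card (stab_in act (carrier G) x)) * f x)"
proof -
  interpret group_action G S "\<lambda>g. \<lambda>x\<in>S. act x g" by (rule group_action_of_acts_on)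
  have orbits: "orbits G S (\<lambda>g. \<lambda>x\<in>S. act x g) = orbit_in act (carrier G) ` S"
    unfolding orbits_def using orbit_eq_orbit_in by blast
  have "(\<Sum>x\<in>S. int (card (stab_in act (carrier G) x)) * f x)
        = (\<Sum>Ob \<in> orbit_in act (carrier G) ` S. \<Sum>x\<in>Ob. int (card (stab_in act (carrier G) x)) * f x)"
    unfolding orbits[symmetric] by (rule disjoint_sum[OF fin(2), symmetric])
  also have "\<dots> = (\<Sum>Ob \<in> orbit_in act (carrier G) ` S. int (card (carrier G)) * f (SOME x. x \<in> Ob))"
  proof (rule sum.cong[OF refl])
    fix Ob assume "Ob \<in> orbit_in act (carrier G) ` S"
    then obtain y where y: "y \<in> S" "Ob = orbit_in act (carrier G) y" by auto
    have "y \<in> Ob" using y orbit_refl by (simp add: orbit_eq_orbit_in)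
    then have "(SOME x. x \<in> Ob) \<in> Ob" by (rule someI)
    then have "f (SOME x. x \<in> Ob) = f y" using y inv unfolding orbit_in_def by auto
    then show "(\<Sum>x\<in>Ob. int (card (stab_in act (carrier G) x)) * f x) = int (card (carrier G)) * f (SOME x. x \<in> Ob)"
      using sum_orbit_in_weighted[OF fin(1) y(1) inv] y(2) by simp
  qed
  finally show ?thesis by (simp add: sum_distrib_left)
qed

end

lemma acts_on_AutoGroup:
  assumes "group A"
  shows "acts_on (AutoGroup A) (\<lambda>x a. a x) (carrier A)"
  unfolding acts_on_def AutoGroup_def BijGroup_def
  by (auto simp: auto_def hom_def compose_def dest: funcset_mem)

lemma AutoGroup_mult_apply:
  "group A \<Longrightarrow> a \<in> auto A \<Longrightarrow> b \<in> auto A \<Longrightarrow> x \<in> carrier A \<Longrightarrow> (a \<otimes>\<^bsub>AutoGroup A\<^esub> b) x = a (b x)"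
  using acts_on_mult[OF acts_on_AutoGroup] by (simp add: AutoGroup_def)

lemma auto_closed: "t \<in> auto A \<Longrightarrow> x \<in> carrier A \<Longrightarrow> t x \<in> carrier A"
  unfolding auto_def hom_def by auto

lemma auto_one: "group A \<Longrightarrow> t \<in> auto A \<Longrightarrow> t \<one>\<^bsub>A\<^esub> = \<one>\<^bsub>A\<^esub>"
  unfolding auto_def by (intro group_hom.hom_one group_hom.intro group_hom_axioms.intro) auto

lemma AutoGroup_one_apply: "x \<in> carrier A \<Longrightarrow> \<one>\<^bsub>AutoGroup A\<^esub> x = x"
  by (simp add: AutoGroup_def BijGroup_def)

lemma finite_auto:
  assumes fin: "finite (carrier A)"
  shows "finite (auto A)"
proof -
  have "auto A \<subseteq> carrier A \<rightarrow>\<^sub>E carrier A"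
  proof
    fix f assume "f \<in> auto A"
    then have "f \<in> extensional (carrier A)" "bij_betw f (carrier A) (carrier A)"
      unfolding auto_def Bij_def by blast+
    then show "f \<in> carrier A \<rightarrow>\<^sub>E carrier A"
      unfolding PiE_iff using bij_betwE by blast
  qed
  moreover have "finite (carrier A \<rightarrow>\<^sub>E carrier A)" using fin by (simp add: finite_PiE)
  ultimately show ?thesis by (rule finite_subset)
qed

lemma acts_on_inv_abelian:
  assumes A: "group A" and T: "subgroup T (AutoGroup A)" "\<forall>a\<in>T. \<forall>b\<in>T. a \<otimes>\<^bsub>AutoGroup A\<^esub> b = b \<otimes>\<^bsub>AutoGroup A\<^esub> a"
    and \<tau>: "\<And>g. g \<in> carrier G \<Longrightarrow> \<tau> g \<in> T" "\<tau> \<one>\<^bsub>G\<^esub> = \<one>\<^bsub>AutoGroup A\<^esub>"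
      "\<And>g h. g \<in> carrier G \<Longrightarrow> h \<in> carrier G \<Longrightarrow> \<tau> (g \<otimes>\<^bsub>G\<^esub> h) = \<tau> g \<otimes>\<^bsub>AutoGroup A\<^esub> \<tau> h"
  shows "acts_on G (\<lambda>x g. (inv\<^bsub>AutoGroup A\<^esub> \<tau> g) x) (carrier A)"
proof -
  interpret Aut: group "AutoGroup A" using group.AutoGroup[OF A] .
  have inv_closed: "inv\<^bsub>AutoGroup A\<^esub> \<tau> g \<in> carrier (AutoGroup A)" if "g \<in> carrier G" for g
    using \<tau>(1)[OF that] subgroup.subset[OF T(1)] by blast
  have "inv\<^bsub>AutoGroup A\<^esub> \<tau> (g \<otimes>\<^bsub>G\<^esub> h) = inv\<^bsub>AutoGroup A\<^esub> \<tau> g \<otimes>\<^bsub>AutoGroup A\<^esub> inv\<^bsub>AutoGroup A\<^esub> \<tau> h"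
    if "g \<in> carrier G" "h \<in> carrier G" for g h
  proof -
    have "\<tau> g \<in> T" "\<tau> h \<in> T" using \<tau>(1) that by auto
    moreover have "inv\<^bsub>AutoGroup A\<^esub> \<tau> g \<in> T" "inv\<^bsub>AutoGroup A\<^esub> \<tau> h \<in> T"
      using calculation subgroup.m_inv_closed[OF T(1)] by auto
    ultimately show ?thesis
      using \<tau>(3)[OF that] T(2) subgroup.subset[OF T(1)] by (simp add: Aut.inv_mult_group subset_iff)
  qed
  then show ?thesis
    using acts_on_AutoGroup[OF A] inv_closed \<tau>(2) unfolding acts_on_def by simp
qed

section \<open>Transfer of E along an action through an abelian group\<close>

lemma stab_in_translate:
  assumes "T \<subseteq> auto A" and comm: "\<forall>s\<in>T. \<forall>t\<in>T. \<forall>x\<in>carrier A. s (t x) = t (s x)"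
    and through: "\<forall>h\<in>H. \<exists>s\<in>T. \<forall>x\<in>carrier A. act x h = s x"
    and t: "t \<in> T" and n0: "n0 \<in> carrier A"
  shows "stab_in act H (t n0) = stab_in act H n0"
proof -
  have tA: "t \<in> auto A" using t assms(1) by blast
  have "act (t n0) h = t n0 \<longleftrightarrow> act n0 h = n0" if h: "h \<in> H" for h
  proof -
    obtain s where s: "s \<in> T" "\<forall>x\<in>carrier A. act x h = s x" using through h by blast
    then have "act (t n0) h = t (act n0 h)" using comm t n0 auto_closed[OF tA n0] by simp
    moreover have "act n0 h \<in> carrier A" using s n0 auto_closed[of s A n0] assms(1) by auto
    moreover have "inj_on t (carrier A)" using tA unfolding auto_def Bij_def bij_betw_def by blast
    ultimately show ?thesis using n0 by (metis inj_on_eq_iff)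
  qed
  then show ?thesis unfolding stab_in_def by blast
qed

lemma int_eq_one_if_mult_eq:
  fixes s :: int and m n :: nat
  assumes e: "int m * s = int n" and pos: "0 < n" and le: "n \<le> m"
  shows "s = 1"
proof -
  have "0 < s"
  proof (rule ccontr)
    assume "\<not> 0 < s"
    then have "int m * s \<le> 0" by (simp add: mult_nonneg_nonpos)
    then show False using e pos by simp
  qed
  moreover have "s \<le> 1"
  proof (rule ccontr)
    assume "\<not> s \<le> 1"
    then have "int m * 2 \<le> int m * s" by (simp add: mult_left_mono)
    then show False using e pos le by simp
  qed
  ultimately show ?thesis by simp
qed

locale E_transfer =
  fixes A :: "'a monoid" and p :: nat and T K :: "('a \<Rightarrow> 'a) set" and f :: "'a \<Rightarrow> int" and n0 :: 'a
    and J :: "('g, 'c) monoid_scheme" and H :: "'g set" and act :: "'a \<Rightarrow> 'g \<Rightarrow> 'a"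
  assumes A: "group A" and p: "Factorial_Ring.prime p"
    and exp: "\<forall>x\<in>carrier A. x [^]\<^bsub>A\<^esub> p = \<one>\<^bsub>A\<^esub>" and card_A: "card (carrier A) = p * p"
    and T: "subgroup T (AutoGroup A)" "\<forall>a\<in>T. \<forall>b\<in>T. a \<otimes>\<^bsub>AutoGroup A\<^esub> b = b \<otimes>\<^bsub>AutoGroup A\<^esub> a"
    and K: "subgroup K (AutoGroup A)" "K \<subseteq> T"
    and fE: "in_E (AutoGroup A) (\<lambda>x a. a x) K A f"
    and n0: "n0 \<in> carrier A"
    and supp: "\<forall>x\<in>carrier A. x \<notin> orbit_in (\<lambda>x a. a x) T n0 \<longrightarrow> f x = 0"
    and J: "group J" and H: "subgroup H J" "finite H"
    and act: "acts_on J act (carrier A)"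
    and H_through_T: "\<forall>h\<in>H. \<exists>t\<in>T. \<forall>x\<in>carrier A. act x h = t x"
    and T_realized: "\<forall>t\<in>T. \<exists>g\<in>carrier J. \<forall>x\<in>carrier A. act x g = t x"
    and K_realized: "\<forall>k\<in>K. \<exists>h\<in>H. \<forall>x\<in>carrier A. act x h = k x"
    and f_inv: "\<forall>x\<in>carrier A. \<forall>h\<in>H. f (act x h) = f x"
begin

abbreviation "ev \<equiv> \<lambda>x a. a x"
abbreviation "KG \<equiv> (AutoGroup A)\<lparr>carrier := K\<rparr>"
abbreviation "HG \<equiv> J\<lparr>carrier := H\<rparr>"

lemma T_auto: "T \<subseteq> auto A"
  using subgroup.subset[OF T(1)] by (simp add: AutoGroup_def)

lemma finite_A: "finite (carrier A)"
  by (intro card_ge_0_finite) (simp add: card_A prime_gt_0_nat[OF p])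

lemma finite_K: "finite K"
  using K(2) T_auto finite_auto[OF finite_A] by (blast intro: finite_subset)

lemma groups_restricted: "group KG" "group HG"
  using subgroup.subgroup_is_group[OF K(1) group.AutoGroup[OF A]] subgroup.subgroup_is_group[OF H(1) J]
  by auto

lemma acts_on_restricted: "acts_on KG ev (carrier A)" "acts_on HG act (carrier A)"
  using acts_on_subgroup[OF acts_on_AutoGroup[OF A] K(1)] acts_on_subgroup[OF act H(1)] by auto

lemma T_commute: "\<forall>s\<in>T. \<forall>t\<in>T. \<forall>x\<in>carrier A. s (t x) = t (s x)"
proof (intro ballI)
  fix s t x assume "s \<in> T" "t \<in> T" "x \<in> carrier A"
  then show "s (t x) = t (s x)"
    using T(2) T_auto AutoGroup_mult_apply[OF A, of s t x] AutoGroup_mult_apply[OF A, of t s x] by auto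
qed

text \<open>Since T is abelian, stabilizers are constant along the T-orbit that carries f.\<close>

lemma weight_const:
  assumes through: "\<forall>h\<in>H'. \<exists>s\<in>T. \<forall>x\<in>carrier A. act' x h = s x" and x: "x \<in> carrier A"
  shows "int (card (stab_in act' H' x)) * f x = int (card (stab_in act' H' n0)) * f x"
proof (cases "f x = 0")
  case False
  then obtain t where "t \<in> T" "x = t n0" using supp x unfolding orbit_in_def by blast
  then show ?thesis using stab_in_translate[OF T_auto T_commute through _ n0] by simp
qed simp

lemma weight_K: "x \<in> carrier A \<Longrightarrow>
    int (card (stab_in ev K x)) * f x = int (card (stab_in ev K n0)) * f x"
  by (rule weight_const) (use K(2) in blast)

lemma weight_H: "x \<in> carrier A \<Longrightarrow>
    int (card (stab_in act H x)) * f x = int (card (stab_in act H n0)) * f x"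
  by (rule weight_const[OF H_through_T])

lemma orbit_K_subset_orbit_H:
  assumes x: "x \<in> carrier A"
  shows "orbit_in ev K x \<subseteq> orbit_in act H x"
proof
  fix y assume "y \<in> orbit_in ev K x"
  then obtain k where k: "k \<in> K" "y = k x" unfolding orbit_in_def by blast
  obtain h where h: "h \<in> H" "act x h = k x" using K_realized x k(1) by blast
  then have "y = act x h" using k(2) by simp
  then show "y \<in> orbit_in act H x" unfolding orbit_in_def using h(1) by blast
qed

lemma card_orbit_K_le: "x \<in> carrier A \<Longrightarrow> card (orbit_in ev K x) \<le> card (orbit_in act H x)"
  by (rule card_mono[OF _ orbit_K_subset_orbit_H]) (use H(2) in \<open>simp_all add: orbit_in_def\<close>)

lemma orbit_stab_K: "x \<in> carrier A \<Longrightarrow> card (orbit_in ev K x) * card (stab_in ev K x) = card K"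
  using card_orbit_in_mult_card_stab_in[OF groups_restricted(1) acts_on_restricted(1)] finite_K by simp

lemma orbit_stab_H: "x \<in> carrier A \<Longrightarrow> card (orbit_in act H x) * card (stab_in act H x) = card H"
  using card_orbit_in_mult_card_stab_in[OF groups_restricted(2) acts_on_restricted(2)] H(2) by simp

lemma stab_K_pos: "x \<in> carrier A \<Longrightarrow> card (stab_in ev K x) > 0"
  using card_stab_in_pos[OF groups_restricted(1) acts_on_restricted(1)] finite_K by simp

lemma stab_H_pos: "x \<in> carrier A \<Longrightarrow> card (stab_in act H x) > 0"
  using card_stab_in_pos[OF groups_restricted(2) acts_on_restricted(2)] H(2) by simp

lemma sum_eq_card_orbit_K: "(\<Sum>x\<in>carrier A. f x) = int (card (orbit_in ev K n0))"
proof -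
  have "int (card K) * 1 = (\<Sum>x\<in>carrier A. int (card (stab_in ev K x)) * f x)"
    using orbit_in_sum[OF groups_restricted(1) acts_on_restricted(1), of f] finite_K finite_A fE unfolding in_E_def by simp
  also have "\<dots> = int (card (stab_in ev K n0)) * (\<Sum>x\<in>carrier A. f x)"
    by (simp add: weight_K sum_distrib_left)
  finally have "int (card (stab_in ev K n0)) * (\<Sum>x\<in>carrier A. f x)
      = int (card (stab_in ev K n0)) * int (card (orbit_in ev K n0))"
    using orbit_stab_K[OF n0] by (simp add: mult.commute flip: of_nat_mult)
  then show ?thesis using stab_K_pos[OF n0] by simp
qed

lemma orbit_sum_H: "(\<Sum>Ob \<in> orbit_in act H ` carrier A. f (SOME x. x \<in> Ob)) = 1"
proof -
  define s where "s = (\<Sum>Ob \<in> orbit_in act H ` carrier A. f (SOME x. x \<in> Ob))"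
  have "int (card H) * s = (\<Sum>x\<in>carrier A. int (card (stab_in act H x)) * f x)"
    using orbit_in_sum[OF groups_restricted(2) acts_on_restricted(2), of f] H(2) finite_A f_inv by (simp add: s_def)
  also have "\<dots> = int (card (stab_in act H n0)) * int (card (orbit_in ev K n0))"
    by (simp add: weight_H sum_distrib_left[symmetric] sum_eq_card_orbit_K)
  finally have "int (card (stab_in act H n0)) * (int (card (orbit_in act H n0)) * s)
      = int (card (stab_in act H n0)) * int (card (orbit_in ev K n0))"
    using orbit_stab_H[OF n0] by (simp add: mult.commute mult.left_commute flip: of_nat_mult)
  then have "int (card (orbit_in act H n0)) * s = int (card (orbit_in ev K n0))"
    using stab_H_pos[OF n0] by simp
  moreover have "card (orbit_in ev K n0) > 0"
    using K(1) subgroup.one_closed finite_K unfolding orbit_in_def by (auto simp: card_gt_0_iff)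
  ultimately have "s = 1" using int_eq_one_if_mult_eq card_orbit_K_le[OF n0] by blast
  then show ?thesis by (simp add: s_def)
qed

lemma cocyclic_sum_nonneg:
  assumes L: "min_cocyclic A L" and C: "C \<in> rcosets\<^bsub>A\<^esub> L"
  shows "(\<Sum>c \<in> C. int (card (stab_in act H c)) * f c) \<ge> 0"
proof -
  have "C \<subseteq> carrier A"
    using L C subgroup.rcosets_carrier A unfolding min_cocyclic_def by blast
  then have K_sum: "(\<Sum>c \<in> C. int (card (stab_in ev K c)) * f c) = int (card (stab_in ev K n0)) * (\<Sum>c\<in>C. f c)"
    and H_sum: "(\<Sum>c \<in> C. int (card (stab_in act H c)) * f c) = int (card (stab_in act H n0)) * (\<Sum>c\<in>C. f c)"
    by (auto simp: sum_distrib_left weight_K weight_H subset_iff intro!: sum.cong)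
  have "(\<Sum>c \<in> C. int (card (stab_in ev K c)) * f c) \<ge> 0"
    using fE L C unfolding in_E_def by blast
  then have "(\<Sum>c\<in>C. f c) \<ge> 0" using stab_K_pos[OF n0] by (simp add: K_sum zero_le_mult_iff)
  then show ?thesis by (simp add: H_sum)
qed

lemma pi0_part_trivial: "a \<in> carrier A \<Longrightarrow> pi_part A (pi0 A) a = \<one>\<^bsub>A\<^esub>"
  by (rule pi_part_exponent_prime_trivial[OF A p exp _ prime_notin_pi0[OF A p exp card_A]])

lemma stab_in_one: "stab_in act H \<one>\<^bsub>A\<^esub> = H"
proof -
  have "act \<one>\<^bsub>A\<^esub> h = \<one>\<^bsub>A\<^esub>" if h: "h \<in> H" for h
  proof -
    from H_through_T h obtain s where s: "s \<in> T" "\<forall>x\<in>carrier A. act x h = s x" by blast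
    have "s \<in> auto A" using s(1) T_auto by (rule subsetD[rotated])
    then have "s \<one>\<^bsub>A\<^esub> = \<one>\<^bsub>A\<^esub>" by (rule auto_one[OF A])
    then show ?thesis using s(2) monoid.one_closed[OF group.is_monoid[OF A]] by simp
  qed
  then show ?thesis unfolding stab_in_def by auto
qed

lemma stab_K_one: "stab_in ev K \<one>\<^bsub>A\<^esub> = K"
  using K(2) T_auto auto_one[OF A] unfolding stab_in_def by auto

lemma lower_bound_H:
  assumes a: "a \<in> carrier A"
  shows "real_of_int (f a) \<ge> - hA A * (real (card (stab_in act H (pi_part A (pi0 A) a))) / real (card (stab_in act H a)))"
proof -
  have ratio_H: "real (card (stab_in act H (pi_part A (pi0 A) a))) / real (card (stab_in act H a))
      = real (card (orbit_in act H a))"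
    using orbit_stab_H[OF a] stab_H_pos[OF a]
    by (simp add: pi0_part_trivial[OF a] stab_in_one field_simps flip: of_nat_mult)
  have ratio_K: "real (card (stab_in ev K (pi_part A (pi0 A) a))) / real (card (stab_in ev K a))
      = real (card (orbit_in ev K a))"
    using orbit_stab_K[OF a] stab_K_pos[OF a]
    by (simp add: pi0_part_trivial[OF a] stab_K_one field_simps flip: of_nat_mult)
  have "real_of_int (f a) \<ge> - hA A * (real (card (stab_in ev K (pi_part A (pi0 A) a))) / real (card (stab_in ev K a)))"
    using fE a unfolding in_E_def by blast
  then have "real_of_int (f a) \<ge> - hA A * real (card (orbit_in ev K a))"
    by (simp only: ratio_K)
  moreover have "hA A * real (card (orbit_in ev K a)) \<le> hA A * real (card (orbit_in act H a))"
    using card_orbit_K_le[OF a] hA_nonneg[of A] by (simp add: mult_left_mono)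
  ultimately show ?thesis unfolding ratio_H by linarith
qed

lemma loc_conj_n0:
  assumes a: "a \<in> carrier A" "f a \<noteq> 0"
  shows "loc_conj J act A n0 a"
  unfolding loc_conj_def
proof (intro allI impI)
  fix r :: nat assume "Factorial_Ring.prime r"
  obtain t where t: "t \<in> T" "a = t n0" using supp a unfolding orbit_in_def by blast
  show "\<exists>g\<in>carrier J. act (pi_part A {r} n0) g = pi_part A {r} a"
  proof (cases "r = p")
    case True
    obtain g where "g \<in> carrier J" "\<forall>x\<in>carrier A. act x g = t x" using T_realized t(1) by blast
    then show ?thesis
      using t(2) pi_part_exponent_prime_self[OF A p exp] n0 a(1) True by auto
  next
    case False
    then have "pi_part A {r} n0 = \<one>\<^bsub>A\<^esub>" "pi_part A {r} a = \<one>\<^bsub>A\<^esub>"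
      using pi_part_exponent_prime_trivial[OF A p exp] n0 a(1) by auto
    moreover have "act \<one>\<^bsub>A\<^esub> \<one>\<^bsub>J\<^esub> = \<one>\<^bsub>A\<^esub>"
      using acts_on_one[OF act monoid.one_closed[OF group.is_monoid[OF A]]] .
    ultimately show ?thesis using monoid.one_closed[OF group.is_monoid[OF J]] by auto
  qed
qed

theorem in_E: "in_E J act H A f"
  unfolding in_E_def
proof (intro conjI)
  show "\<exists>c\<in>carrier A. \<forall>a\<in>carrier A. f a \<noteq> 0 \<longrightarrow> loc_conj J act A c a"
    using n0 loc_conj_n0 by blast
  show "\<exists>a\<in>carrier A. f a < 0" using fE unfolding in_E_def by blast
  show "\<forall>a\<in>carrier A. \<forall>h\<in>H. f (act a h) = f a" by (rule f_inv)
  show "(\<Sum>Orb \<in> orbit_in act H ` carrier A. f (SOME x. x \<in> Orb)) = 1" by (rule orbit_sum_H)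
  show "\<forall>L. min_cocyclic A L \<longrightarrow> (\<forall>C \<in> rcosets\<^bsub>A\<^esub> L.
          (\<Sum>c \<in> C. int (card (stab_in act H c)) * f c) \<ge> 0)"
    using cocyclic_sum_nonneg by blast
  show "\<forall>a \<in> carrier A. real_of_int (f a) \<ge>
          - hA A * (real (card (stab_in act H (pi_part A (pi0 A) a))) / real (card (stab_in act H a)))"
    using lower_bound_H by blast
qed

end

section \<open>Fibre products over isomorphic quotients\<close>

lemma pullback_subgroup:
  assumes G: "group G" and H: "group H" and K: "group K"
    and S: "subgroup S G" and T: "subgroup T H"
    and \<phi>: "\<phi> \<in> hom (G\<lparr>carrier := S\<rparr>) K" and \<psi>: "\<psi> \<in> hom (H\<lparr>carrier := T\<rparr>) K"
  shows "subgroup {\<sigma> \<in> S \<times> T. \<phi> (fst \<sigma>) = \<psi> (snd \<sigma>)} (G \<times>\<times> H)"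
proof -
  interpret G: group G by (fact G)
  interpret H: group H by (fact H)
  interpret \<phi>: group_hom "G\<lparr>carrier := S\<rparr>" K \<phi>
    using \<phi> G.subgroup_imp_group[OF S] K by (simp add: group_hom_def group_hom_axioms_def)
  interpret \<psi>: group_hom "H\<lparr>carrier := T\<rparr>" K \<psi>
    using \<psi> H.subgroup_imp_group[OF T] K by (simp add: group_hom_def group_hom_axioms_def)
  show ?thesis
  proof (rule group.subgroupI[OF DirProd_group[OF G H]])
    show "{\<sigma> \<in> S \<times> T. \<phi> (fst \<sigma>) = \<psi> (snd \<sigma>)} \<subseteq> carrier (G \<times>\<times> H)"
      using subgroup.subset[OF S] subgroup.subset[OF T] by auto
    show "{\<sigma> \<in> S \<times> T. \<phi> (fst \<sigma>) = \<psi> (snd \<sigma>)} \<noteq> {}"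
      using \<phi>.hom_one \<psi>.hom_one subgroup.one_closed[OF S] subgroup.one_closed[OF T] by force
  next
    fix \<sigma> assume "\<sigma> \<in> {\<sigma> \<in> S \<times> T. \<phi> (fst \<sigma>) = \<psi> (snd \<sigma>)}"
    then obtain a b where ab: "\<sigma> = (a, b)" "a \<in> S" "b \<in> T" "\<phi> a = \<psi> b" by auto
    have "\<phi> (inv\<^bsub>G\<^esub> a) = \<psi> (inv\<^bsub>H\<^esub> b)"
      using \<phi>.hom_inv[of a] \<psi>.hom_inv[of b] ab S T by simp
    moreover have "inv\<^bsub>G \<times>\<times> H\<^esub> \<sigma> = (inv\<^bsub>G\<^esub> a, inv\<^bsub>H\<^esub> b)"
      using inv_DirProd[OF G H] ab(1-3) subgroup.mem_carrier[OF S] subgroup.mem_carrier[OF T] by simp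
    ultimately show "inv\<^bsub>G \<times>\<times> H\<^esub> \<sigma> \<in> {\<sigma> \<in> S \<times> T. \<phi> (fst \<sigma>) = \<psi> (snd \<sigma>)}"
      using ab(2,3) S T by (simp add: subgroup.m_inv_closed)
  next
    fix \<sigma> \<tau> assume "\<sigma> \<in> {\<sigma> \<in> S \<times> T. \<phi> (fst \<sigma>) = \<psi> (snd \<sigma>)}" "\<tau> \<in> {\<sigma> \<in> S \<times> T. \<phi> (fst \<sigma>) = \<psi> (snd \<sigma>)}"
    then show "\<sigma> \<otimes>\<^bsub>G \<times>\<times> H\<^esub> \<tau> \<in> {\<sigma> \<in> S \<times> T. \<phi> (fst \<sigma>) = \<psi> (snd \<sigma>)}"
      using \<phi>.hom_mult \<psi>.hom_mult S T by (auto simp: subgroup.m_closed)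
  qed
qed

lemma (in comm_group) l_coset_eq_r_coset: "x \<in> carrier G \<Longrightarrow> H \<subseteq> carrier G \<Longrightarrow> x <# H = H #> x"
  unfolding l_coset_def r_coset_def using m_comm by blast

locale fibre_product =
  fixes P :: "'p monoid" and Q :: "'q monoid" and Tp Kp :: "'p set" and Tq Kq :: "'q set"
    and \<alpha> :: "'p set \<Rightarrow> 'q set"
  assumes P: "group P" and Q: "group Q"
    and Tp: "subgroup Tp P" "\<forall>a\<in>Tp. \<forall>b\<in>Tp. a \<otimes>\<^bsub>P\<^esub> b = b \<otimes>\<^bsub>P\<^esub> a"
    and Tq: "subgroup Tq Q" "\<forall>a\<in>Tq. \<forall>b\<in>Tq. a \<otimes>\<^bsub>Q\<^esub> b = b \<otimes>\<^bsub>Q\<^esub> a"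
    and Kp: "subgroup Kp P" "Kp \<subseteq> Tp"
    and Kq: "subgroup Kq Q" "Kq \<subseteq> Tq"
    and \<alpha>_iso: "\<alpha> \<in> iso (P\<lparr>carrier := Tp\<rparr> Mod Kp) (Q\<lparr>carrier := Tq\<rparr> Mod Kq)"
begin

abbreviation "TP \<equiv> P\<lparr>carrier := Tp\<rparr>"
abbreviation "TQ \<equiv> Q\<lparr>carrier := Tq\<rparr>"

definition fibre :: "('p \<times> 'q) set" where
  "fibre = {\<sigma> \<in> Tp \<times> Tq. \<alpha> (Kp #>\<^bsub>TP\<^esub> fst \<sigma>) = Kq #>\<^bsub>TQ\<^esub> snd \<sigma>}"

lemma comm_TP: "comm_group TP"
  using Tp(2) by (intro group.group_comm_groupI[OF group.subgroup_imp_group[OF P Tp(1)]]) auto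

lemma comm_TQ: "comm_group TQ"
  using Tq(2) by (intro group.group_comm_groupI[OF group.subgroup_imp_group[OF Q Tq(1)]]) auto

lemma normal_Kp: "Kp \<lhd> TP"
  using comm_group.subgroup_imp_normal[OF comm_TP] group.subgroup_incl[OF P Kp(1) Tp(1) Kp(2)] by blast

lemma normal_Kq: "Kq \<lhd> TQ"
  using comm_group.subgroup_imp_normal[OF comm_TQ] group.subgroup_incl[OF Q Kq(1) Tq(1) Kq(2)] by blast

lemma \<alpha>_hom: "group_hom (TP Mod Kp) (TQ Mod Kq) \<alpha>"
  using \<alpha>_iso normal.factorgroup_is_group[OF normal_Kp] normal.factorgroup_is_group[OF normal_Kq]
  by (simp add: group_hom_def group_hom_axioms_def iso_def)

lemma fibre_subgroup: "subgroup fibre (P \<times>\<times> Q)"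
proof -
  have "\<alpha> \<in> hom (TP Mod Kp) (TQ Mod Kq)" using \<alpha>_iso by (simp add: iso_def)
  then have "\<alpha> \<circ> (\<lambda>a. Kp #>\<^bsub>TP\<^esub> a) \<in> hom TP (TQ Mod Kq)"
    by (rule hom_compose[OF normal.r_coset_hom_Mod[OF normal_Kp]])
  then show ?thesis
    using pullback_subgroup[OF P Q normal.factorgroup_is_group[OF normal_Kq] Tp(1) Tq(1) _
        normal.r_coset_hom_Mod[OF normal_Kq]]
    unfolding fibre_def by (simp add: comp_def)
qed

lemma fibre_fst_surj: "a \<in> Tp \<Longrightarrow> \<exists>b. (a, b) \<in> fibre"
  using group_hom.hom_closed[OF \<alpha>_hom, of "Kp #>\<^bsub>TP\<^esub> a"]
  by (auto simp: fibre_def FactGroup_def RCOSETS_def)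

lemma fibre_snd_surj:
  assumes b: "b \<in> Tq"
  shows "\<exists>a. (a, b) \<in> fibre"
proof -
  have "Kq #>\<^bsub>TQ\<^esub> b \<in> carrier (TQ Mod Kq)"
    using b unfolding FactGroup_def RCOSETS_def by auto
  moreover have "\<alpha> ` carrier (TP Mod Kp) = carrier (TQ Mod Kq)"
    using \<alpha>_iso by (simp add: iso_def bij_betw_def)
  ultimately have "Kq #>\<^bsub>TQ\<^esub> b \<in> \<alpha> ` carrier (TP Mod Kp)" by simp
  then obtain C where C: "C \<in> carrier (TP Mod Kp)" "\<alpha> C = Kq #>\<^bsub>TQ\<^esub> b"
    by (auto elim: imageE)
  then obtain a where "a \<in> Tp" "C = Kp #>\<^bsub>TP\<^esub> a"
    unfolding FactGroup_def RCOSETS_def by auto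
  then show ?thesis using b C(2) unfolding fibre_def by auto
qed

lemma r_coset_Kp_trivial: "k \<in> Kp \<Longrightarrow> Kp #>\<^bsub>TP\<^esub> k = \<one>\<^bsub>TP Mod Kp\<^esub>"
  using subgroup.rcos_const[OF normal_imp_subgroup[OF normal_Kp] group.subgroup_imp_group[OF P Tp(1)]]
  by (simp add: FactGroup_def)

lemma r_coset_Kq_trivial: "k \<in> Kq \<Longrightarrow> Kq #>\<^bsub>TQ\<^esub> k = \<one>\<^bsub>TQ Mod Kq\<^esub>"
  using subgroup.rcos_const[OF normal_imp_subgroup[OF normal_Kq] group.subgroup_imp_group[OF Q Tq(1)]]
  by (simp add: FactGroup_def)

lemma fibre_Kp: "k \<in> Kp \<Longrightarrow> (k, \<one>\<^bsub>Q\<^esub>) \<in> fibre"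
  using r_coset_Kp_trivial r_coset_Kq_trivial[OF subgroup.one_closed[OF Kq(1)]] group_hom.hom_one[OF \<alpha>_hom]
    Kp(2) subgroup.one_closed[OF Tq(1)]
  unfolding fibre_def by auto

lemma fibre_Kq: "k \<in> Kq \<Longrightarrow> (\<one>\<^bsub>P\<^esub>, k) \<in> fibre"
  using r_coset_Kq_trivial r_coset_Kp_trivial[OF subgroup.one_closed[OF Kp(1)]] group_hom.hom_one[OF \<alpha>_hom]
    Kq(2) subgroup.one_closed[OF Tp(1)]
  unfolding fibre_def by auto

lemma fibre_l_coset:
  "(a, b) \<in> fibre \<longleftrightarrow> a \<in> Tp \<and> b \<in> Tq \<and> \<alpha> (a <#\<^bsub>TP\<^esub> Kp) = b <#\<^bsub>TQ\<^esub> Kq"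
  using comm_group.l_coset_eq_r_coset[OF comm_TP, of a Kp] comm_group.l_coset_eq_r_coset[OF comm_TQ, of b Kq] Kp(2) Kq(2)
  by (auto simp: fibre_def)

end

section \<open>Compatible pairs of actions\<close>

locale compatible_actions =
  fixes G (structure) and actp :: "'x \<Rightarrow> 'g \<Rightarrow> 'x" and Xp and actq :: "'y \<Rightarrow> 'g \<Rightarrow> 'y" and Xq
    and fp :: "'x \<Rightarrow> int" and fq :: "'y \<Rightarrow> int" and np nq
  assumes G: "group G" and actp: "acts_on G actp Xp" and actq: "acts_on G actq Xq"
    and np: "np \<in> Xp" and nq: "nq \<in> Xq"
    and compat: "\<And>g. g \<in> carrier G \<Longrightarrow> fp (actp np g) = fq (actq nq (inv g))"
    and fp_vanish: "\<And>x. x \<in> Xp \<Longrightarrow> x \<notin> orbit_in actp (carrier G) np \<Longrightarrow> fp x = 0"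
    and fq_vanish: "\<And>y. y \<in> Xq \<Longrightarrow> y \<notin> orbit_in actq (carrier G) nq \<Longrightarrow> fq y = 0"
begin

lemma fp_vanish_act:
  assumes "x \<in> Xp" "g \<in> carrier G" "x \<notin> orbit_in actp (carrier G) np"
  shows "fp (actp x g) = 0"
  using fp_vanish acts_on_closed[OF actp] acts_on_orbit_in_iff[OF G actp _ _ np] assms by blast

lemma fp_stab_invariant:
  assumes h: "h \<in> stab_in actq (carrier G) nq" and x: "x \<in> Xp"
  shows "fp (actp x h) = fp x"
proof (cases "x \<in> orbit_in actp (carrier G) np")
  case True
  then obtain c where c: "c \<in> carrier G" "x = actp np c" unfolding orbit_in_def by blast
  have hG: "h \<in> carrier G" and hinv: "actq nq (inv h) = nq"
    using h subgroup.m_inv_closed[OF stab_in_subgroup[OF G actq nq]] unfolding stab_in_def by auto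
  interpret group G by (fact G)
  have "fp (actp x h) = fp (actp np (h \<otimes> c))" using acts_on_mult[OF actp np] c hG by simp
  also have "\<dots> = fq (actq nq (inv c \<otimes> inv h))" using compat c hG by (simp add: inv_mult_group)
  also have "\<dots> = fq (actq nq (inv c))" using acts_on_mult[OF actq nq] hinv c hG by simp
  also have "\<dots> = fp x" using compat c by simp
  finally show ?thesis .
next
  case False
  then show ?thesis using fp_vanish_act[OF x] fp_vanish[OF x] h unfolding stab_in_def by simp
qed

lemma compat_swap: "g \<in> carrier G \<Longrightarrow> fq (actq nq g) = fp (actp np (inv g))"
  using compat[of "inv g"] group.inv_inv[OF G] group.inv_closed[OF G] by simp

end

sublocale compatible_actions \<subseteq> swap: compatible_actions G actq Xq actp Xp fq fp nq np
  by (rule compatible_actions.intro[OF G actq actp nq np]) (use compat_swap fp_vanish fq_vanish in auto)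

context compatible_actions
begin

definition glued :: "'x \<times> 'y \<Rightarrow> int" where
  "glued x = (if snd x \<notin> orbit_in actq (carrier G) nq then 0
              else fp (actp (fst x) (SOME g. g \<in> carrier G \<and> nq = actq (snd x) g)))"

lemma glued_well_defined:
  assumes x: "x \<in> Xp" and y: "y \<in> Xq" and g: "g \<in> carrier G" "nq = actq y g"
    and g': "g' \<in> carrier G" "nq = actq y g'"
  shows "fp (actp x g) = fp (actp x g')"
proof -
  interpret group G by (fact G)
  define h where "h = g' \<otimes> inv g"
  have hG: "h \<in> carrier G" using g g' by (simp add: h_def)
  have "actq nq h = actq (actq nq (inv g)) g'" using acts_on_mult[OF actq nq] g g' by (simp add: h_def)
  also have "actq nq (inv g) = y" using acts_on_inv_cancel(1)[OF G actq y g(1)] g(2) by simp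
  finally have "h \<in> stab_in actq (carrier G) nq" using g' hG unfolding stab_in_def by simp
  then have "fp (actp (actp x g) h) = fp (actp x g)"
    using fp_stab_invariant acts_on_closed[OF actp x g(1)] by blast
  moreover have "h \<otimes> g = g'" using g g' by (simp add: h_def m_assoc)
  ultimately show ?thesis using acts_on_mult[OF actp x hG g(1)] by simp
qed

lemma orbit_in_solve:
  assumes "y \<in> orbit_in actq (carrier G) nq"
  shows "\<exists>g. g \<in> carrier G \<and> nq = actq y g"
proof -
  obtain c where "c \<in> carrier G" "y = actq nq c" using assms unfolding orbit_in_def by blast
  then show ?thesis using acts_on_inv_cancel(1)[OF G actq nq] group.inv_closed[OF G] by metis
qed

lemma glued_eq_zero:
  assumes x: "x \<in> Xp" "x \<notin> orbit_in actp (carrier G) np" and y: "y \<in> Xq"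
  shows "glued (x, y) = 0"
proof (cases "y \<in> orbit_in actq (carrier G) nq")
  case True
  then have "(SOME g. g \<in> carrier G \<and> nq = actq y g) \<in> carrier G"
    using someI_ex[OF orbit_in_solve] by blast
  then show ?thesis using fp_vanish_act[OF x(1) _ x(2)] True by (simp add: glued_def)
qed (simp add: glued_def)

lemma glued_eq:
  assumes x: "x \<in> Xp" and y: "y \<in> Xq" and g: "g \<in> carrier G" "np = actp x g"
  shows "glued (x, y) = fq (actq y g)"
proof (cases "y \<in> orbit_in actq (carrier G) nq")
  case True
  interpret group G by (fact G)
  define g0 where "g0 = (SOME g. g \<in> carrier G \<and> nq = actq y g)"
  have g0: "g0 \<in> carrier G" "actq y g0 = nq"
    using someI_ex[OF orbit_in_solve[OF True]] unfolding g0_def by auto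
  have x_eq: "x = actp np (inv g)" using acts_on_inv_cancel(1)[OF G actp x g(1)] g(2) by simp
  have y_eq: "y = actq nq (inv g0)" using acts_on_inv_cancel(1)[OF G actq y g0(1)] g0(2) by simp
  have "glued (x, y) = fp (actp x g0)" using True unfolding glued_def g0_def by simp
  also have "\<dots> = fp (actp np (g0 \<otimes> inv g))"
    using acts_on_mult[OF actp np g0(1)] g(1) by (simp add: x_eq)
  also have "\<dots> = fq (actq nq (g \<otimes> inv g0))"
    using compat g0(1) g(1) by (simp add: inv_mult_group)
  also have "\<dots> = fq (actq y g)"
    using acts_on_mult[OF actq nq g(1)] g0(1) by (simp add: y_eq)
  finally show ?thesis .
next
  case False
  then show ?thesis using swap.fp_vanish_act[OF y g(1)] by (simp add: glued_def)
qed

end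

section \<open>Semidirect products\<close>

lemma sdprod_carrier: "carrier (sdprod N W phi) = carrier N \<times> carrier W"
  by (simp add: sdprod_def)

lemma sdprod_mult: "(m, s) \<otimes>\<^bsub>sdprod N W phi\<^esub> (m', s') = (m \<otimes>\<^bsub>N\<^esub> phi s m', s \<otimes>\<^bsub>W\<^esub> s')"
  by (simp add: sdprod_def)

lemma sdprod_one: "\<one>\<^bsub>sdprod N W phi\<^esub> = (\<one>\<^bsub>N\<^esub>, \<one>\<^bsub>W\<^esub>)"
  by (simp add: sdprod_def)

locale semidirect_product =
  fixes N :: "('a, 'x) monoid_scheme" and W :: "('g, 'y) monoid_scheme" and phi :: "'g \<Rightarrow> 'a \<Rightarrow> 'a"
  assumes N: "group N" and W: "group W"
    and phi_closed: "\<And>s x. s\<in>carrier W \<Longrightarrow> x\<in>carrier N \<Longrightarrow> phi s x \<in> carrier N"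
    and phi_mult: "\<And>s x y. s\<in>carrier W \<Longrightarrow> x\<in>carrier N \<Longrightarrow> y\<in>carrier N \<Longrightarrow> phi s (x \<otimes>\<^bsub>N\<^esub> y) = phi s x \<otimes>\<^bsub>N\<^esub> phi s y"
    and phi_compose: "\<And>s t x. s\<in>carrier W \<Longrightarrow> t\<in>carrier W \<Longrightarrow> x\<in>carrier N \<Longrightarrow> phi (s \<otimes>\<^bsub>W\<^esub> t) x = phi s (phi t x)"
    and phi_unit: "\<And>x. x\<in>carrier N \<Longrightarrow> phi \<one>\<^bsub>W\<^esub> x = x"
begin

lemma phi_one: "s \<in> carrier W \<Longrightarrow> phi s \<one>\<^bsub>N\<^esub> = \<one>\<^bsub>N\<^esub>"
  using phi_closed phi_mult by (intro hom_one[OF _ N N]) (auto simp: hom_def)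

lemma sdprod_group: "group (sdprod N W phi)"
proof -
  interpret N: group N by (fact N)
  interpret W: group W by (fact W)
  show ?thesis
  proof (rule groupI)
    fix x y assume "x \<in> carrier (sdprod N W phi)" "y \<in> carrier (sdprod N W phi)"
    then show "x \<otimes>\<^bsub>sdprod N W phi\<^esub> y \<in> carrier (sdprod N W phi)"
      by (cases x, cases y) (auto simp: sdprod_carrier sdprod_mult phi_closed)
  next
    show "\<one>\<^bsub>sdprod N W phi\<^esub> \<in> carrier (sdprod N W phi)" by (simp add: sdprod_carrier sdprod_one)
  next
    fix x y z assume xyz: "x \<in> carrier (sdprod N W phi)" "y \<in> carrier (sdprod N W phi)" "z \<in> carrier (sdprod N W phi)"
    obtain m s where x: "x = (m, s)" by (cases x)
    obtain m' s' where y: "y = (m', s')" by (cases y)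
    obtain m'' s'' where z: "z = (m'', s'')" by (cases z)
    have c: "m \<in> carrier N" "s \<in> carrier W" "m' \<in> carrier N" "s' \<in> carrier W" "m'' \<in> carrier N" "s'' \<in> carrier W"
      using xyz x y z by (auto simp: sdprod_carrier)
    show "x \<otimes>\<^bsub>sdprod N W phi\<^esub> y \<otimes>\<^bsub>sdprod N W phi\<^esub> z = x \<otimes>\<^bsub>sdprod N W phi\<^esub> (y \<otimes>\<^bsub>sdprod N W phi\<^esub> z)"
      using c by (simp add: x y z sdprod_mult phi_mult phi_closed phi_compose N.m_assoc W.m_assoc)
  next
    fix x assume "x \<in> carrier (sdprod N W phi)"
    then show "\<one>\<^bsub>sdprod N W phi\<^esub> \<otimes>\<^bsub>sdprod N W phi\<^esub> x = x"
      by (cases x) (auto simp: sdprod_carrier sdprod_mult sdprod_one phi_unit phi_closed)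
  next
    fix x assume xc: "x \<in> carrier (sdprod N W phi)"
    obtain m s where x: "x = (m, s)" by (cases x)
    have c: "m \<in> carrier N" "s \<in> carrier W" using xc x by (auto simp: sdprod_carrier)
    let ?y = "(phi (inv\<^bsub>W\<^esub> s) (inv\<^bsub>N\<^esub> m), inv\<^bsub>W\<^esub> s)"
    have "?y \<otimes>\<^bsub>sdprod N W phi\<^esub> x = \<one>\<^bsub>sdprod N W phi\<^esub>"
      using c by (simp add: x sdprod_mult sdprod_one phi_mult[symmetric] phi_one)
    moreover have "?y \<in> carrier (sdprod N W phi)" using c by (simp add: sdprod_carrier phi_closed)
    ultimately show "\<exists>y\<in>carrier (sdprod N W phi). y \<otimes>\<^bsub>sdprod N W phi\<^esub> x = \<one>\<^bsub>sdprod N W phi\<^esub>" by blast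
  qed
qed

lemma sdprod_inv:
  assumes "m \<in> carrier N" "s \<in> carrier W"
  shows "inv\<^bsub>sdprod N W phi\<^esub> (m, s) = (phi (inv\<^bsub>W\<^esub> s) (inv\<^bsub>N\<^esub> m), inv\<^bsub>W\<^esub> s)"
proof -
  interpret N: group N by (fact N)
  interpret W: group W by (fact W)
  interpret G: group "sdprod N W phi" by (rule sdprod_group)
  show ?thesis
  proof (rule G.inv_equality)
    show "(phi (inv\<^bsub>W\<^esub> s) (inv\<^bsub>N\<^esub> m), inv\<^bsub>W\<^esub> s) \<otimes>\<^bsub>sdprod N W phi\<^esub> (m, s) = \<one>\<^bsub>sdprod N W phi\<^esub>"
      using assms by (simp add: sdprod_mult sdprod_one phi_mult[symmetric] phi_one)
    show "(m, s) \<in> carrier (sdprod N W phi)" using assms by (simp add: sdprod_carrier)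
    show "(phi (inv\<^bsub>W\<^esub> s) (inv\<^bsub>N\<^esub> m), inv\<^bsub>W\<^esub> s) \<in> carrier (sdprod N W phi)"
      using assms by (simp add: sdprod_carrier phi_closed)
  qed
qed

lemma conj_sd_eq:
  assumes comm: "comm_group N" and x: "x \<in> carrier N" and g: "g \<in> carrier (sdprod N W phi)"
  shows "conj_sd (sdprod N W phi) W x g = phi (inv\<^bsub>W\<^esub> (snd g)) x"
proof -
  interpret N: comm_group N by (rule comm)
  interpret W: group W by (fact W)
  obtain m s where gs: "g = (m, s)" by (cases g)
  have c: "m \<in> carrier N" "s \<in> carrier W" using g gs by (auto simp: sdprod_carrier)
  let ?s = "inv\<^bsub>W\<^esub> s"
  have s': "?s \<in> carrier W" using c by simp
  have "conj_sd (sdprod N W phi) W x g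
      = phi ?s (inv\<^bsub>N\<^esub> m) \<otimes>\<^bsub>N\<^esub> phi ?s x \<otimes>\<^bsub>N\<^esub> phi ?s m"
    unfolding conj_sd_def using c x by (simp add: gs sdprod_inv sdprod_mult phi_closed)
  also have "\<dots> = phi ?s (inv\<^bsub>N\<^esub> m \<otimes>\<^bsub>N\<^esub> x \<otimes>\<^bsub>N\<^esub> m)"
    using c x s' by (simp add: phi_mult)
  also have "inv\<^bsub>N\<^esub> m \<otimes>\<^bsub>N\<^esub> x \<otimes>\<^bsub>N\<^esub> m = x"
    using c x by (metis N.inv_closed N.m_assoc N.m_comm N.r_inv N.r_one)
  finally show ?thesis by (simp add: gs)
qed

end

section \<open>The glued group\<close>

locale gluing =
  fixes p q :: nat
    and Np :: "'a monoid" and Nq :: "'b monoid"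
    and Tp Kp :: "('a \<Rightarrow> 'a) set" and Tq Kq :: "('b \<Rightarrow> 'b) set"
    and fp :: "'a \<Rightarrow> int" and fq :: "'b \<Rightarrow> int"
    and np :: 'a and nq :: 'b
    and \<alpha> :: "('a \<Rightarrow> 'a) set \<Rightarrow> ('b \<Rightarrow> 'b) set"
  assumes primes: "Factorial_Ring.prime p" "Factorial_Ring.prime q"
    and grp: "group Np" "group Nq"
    and Np_iso: "Np \<cong> integer_mod_group p \<times>\<times> integer_mod_group p"
    and Nq_iso: "Nq \<cong> integer_mod_group q \<times>\<times> integer_mod_group q"
    and Tp: "subgroup Tp (AutoGroup Np)" "\<forall>a\<in>Tp. \<forall>b\<in>Tp. a \<otimes>\<^bsub>AutoGroup Np\<^esub> b = b \<otimes>\<^bsub>AutoGroup Np\<^esub> a"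
    and Tq: "subgroup Tq (AutoGroup Nq)" "\<forall>a\<in>Tq. \<forall>b\<in>Tq. a \<otimes>\<^bsub>AutoGroup Nq\<^esub> b = b \<otimes>\<^bsub>AutoGroup Nq\<^esub> a"
    and Kp: "subgroup Kp (AutoGroup Np)" "Kp \<subseteq> Tp"
    and Kq: "subgroup Kq (AutoGroup Nq)" "Kq \<subseteq> Tq"
    and fpE: "in_E (AutoGroup Np) (\<lambda>x a. a x) Kp Np fp"
    and fqE: "in_E (AutoGroup Nq) (\<lambda>x a. a x) Kq Nq fq"
    and n: "np \<in> carrier Np" "nq \<in> carrier Nq"
    and supp_p: "\<forall>x \<in> carrier Np. x \<notin> orbit_in (\<lambda>x a. a x) Tp np \<longrightarrow> fp x = 0"
    and supp_q: "\<forall>y \<in> carrier Nq. y \<notin> orbit_in (\<lambda>y b. b y) Tq nq \<longrightarrow> fq y = 0"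
    and \<alpha>_iso: "\<alpha> \<in> iso ((AutoGroup Np)\<lparr>carrier := Tp\<rparr> Mod Kp) ((AutoGroup Nq)\<lparr>carrier := Tq\<rparr> Mod Kq)"
    and \<alpha>_compat: "\<forall>a \<in> Tp. \<forall>b \<in> Tq.
        b <#\<^bsub>(AutoGroup Nq)\<lparr>carrier := Tq\<rparr>\<^esub> Kq
          = \<alpha> (inv\<^bsub>(AutoGroup Np)\<lparr>carrier := Tp\<rparr>\<^esub> a <#\<^bsub>(AutoGroup Np)\<lparr>carrier := Tp\<rparr>\<^esub> Kp)
        \<longrightarrow> fp (a np) = fq (b nq)"

sublocale gluing \<subseteq> fibre_product "AutoGroup Np" "AutoGroup Nq" Tp Kp Tq Kq \<alpha>
  using group.AutoGroup[OF grp(1)] group.AutoGroup[OF grp(2)] Tp Tq Kp Kq \<alpha>_iso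
  by (intro fibre_product.intro)

context gluing
begin

abbreviation "AP \<equiv> AutoGroup Np"
abbreviation "AQ \<equiv> AutoGroup Nq"
abbreviation "W \<equiv> (AP \<times>\<times> AQ)\<lparr>carrier := fibre\<rparr>"
abbreviation "G \<equiv> sdprod (Np \<times>\<times> Nq) W (\<lambda>\<sigma> x. (fst \<sigma> (fst x), snd \<sigma> (snd x)))"
abbreviation "actp \<equiv> \<lambda>x g. fst (conj_sd G W (x, \<one>\<^bsub>Nq\<^esub>) g)"
abbreviation "actq \<equiv> \<lambda>y g. snd (conj_sd G W (\<one>\<^bsub>Np\<^esub>, y) g)"

lemmas Np_comm = iso_Zp_Zp_comm[OF primes(1) grp(1) Np_iso]
  and Np_exp = iso_Zp_Zp_exponent[OF primes(1) grp(1) Np_iso]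
  and Np_card = iso_Zp_Zp_card[OF primes(1) grp(1) Np_iso]
  and Nq_comm = iso_Zp_Zp_comm[OF primes(2) grp(2) Nq_iso]
  and Nq_exp = iso_Zp_Zp_exponent[OF primes(2) grp(2) Nq_iso]
  and Nq_card = iso_Zp_Zp_card[OF primes(2) grp(2) Nq_iso]

lemma Tp_auto: "Tp \<subseteq> auto Np" and Tq_auto: "Tq \<subseteq> auto Nq"
  using subgroup.subset[OF Tp(1)] subgroup.subset[OF Tq(1)] by (simp_all add: AutoGroup_def)

lemma fibre_auto: "\<sigma> \<in> fibre \<Longrightarrow> fst \<sigma> \<in> auto Np" "\<sigma> \<in> fibre \<Longrightarrow> snd \<sigma> \<in> auto Nq"
  using Tp_auto Tq_auto by (auto simp: fibre_def)

lemma group_W: "group W"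
  using subgroup.subgroup_is_group[OF fibre_subgroup DirProd_group[OF group.AutoGroup[OF grp(1)] group.AutoGroup[OF grp(2)]]] .

lemma inv_W: "(a, b) \<in> fibre \<Longrightarrow> inv\<^bsub>W\<^esub> (a, b) = (inv\<^bsub>AP\<^esub> a, inv\<^bsub>AQ\<^esub> b)"
  using group.m_inv_consistent[OF DirProd_group[OF group.AutoGroup[OF grp(1)] group.AutoGroup[OF grp(2)]] fibre_subgroup]
    inv_DirProd[OF group.AutoGroup[OF grp(1)] group.AutoGroup[OF grp(2)]] fibre_auto
  by (force simp: AutoGroup_def)

lemma semidirect_product_G: "semidirect_product (Np \<times>\<times> Nq) W (\<lambda>\<sigma> x. (fst \<sigma> (fst x), snd \<sigma> (snd x)))"
proof (rule semidirect_product.intro)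
  show "group (Np \<times>\<times> Nq)" using DirProd_group[OF grp] .
  show "group W" by (rule group_W)
next
  fix \<sigma> x assume "\<sigma> \<in> carrier W" "x \<in> carrier (Np \<times>\<times> Nq)"
  moreover have "fst \<sigma> \<in> auto Np" "snd \<sigma> \<in> auto Nq" using calculation(1) fibre_auto by auto
  ultimately show "(fst \<sigma> (fst x), snd \<sigma> (snd x)) \<in> carrier (Np \<times>\<times> Nq)"
    using auto_closed[of "fst \<sigma>" Np] auto_closed[of "snd \<sigma>" Nq] by (auto simp: DirProd_def)
next
  fix \<sigma> x y assume "\<sigma> \<in> carrier W" "x \<in> carrier (Np \<times>\<times> Nq)" "y \<in> carrier (Np \<times>\<times> Nq)"
  then have "fst \<sigma> \<in> hom Np Np" "snd \<sigma> \<in> hom Nq Nq" "fst x \<in> carrier Np" "snd x \<in> carrier Nq"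
    "fst y \<in> carrier Np" "snd y \<in> carrier Nq"
    using fibre_auto by (auto simp: auto_def DirProd_def)
  then show "(fst \<sigma> (fst (x \<otimes>\<^bsub>Np \<times>\<times> Nq\<^esub> y)), snd \<sigma> (snd (x \<otimes>\<^bsub>Np \<times>\<times> Nq\<^esub> y)))
      = (fst \<sigma> (fst x), snd \<sigma> (snd x)) \<otimes>\<^bsub>Np \<times>\<times> Nq\<^esub> (fst \<sigma> (fst y), snd \<sigma> (snd y))"
    by (cases x, cases y) (simp add: hom_mult)
next
  fix \<sigma> \<tau> x assume "\<sigma> \<in> carrier W" "\<tau> \<in> carrier W" "x \<in> carrier (Np \<times>\<times> Nq)"
  moreover obtain a b a' b' x1 x2 where "\<sigma> = (a, b)" "\<tau> = (a', b')" "x = (x1, x2)"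
    by (metis prod.exhaust)
  ultimately have "a \<in> auto Np" "b \<in> auto Nq" "a' \<in> auto Np" "b' \<in> auto Nq"
    "x1 \<in> carrier Np" "x2 \<in> carrier Nq" "\<sigma> = (a, b)" "\<tau> = (a', b')" "x = (x1, x2)"
    using fibre_auto by force+
  then show "(fst (\<sigma> \<otimes>\<^bsub>W\<^esub> \<tau>) (fst x), snd (\<sigma> \<otimes>\<^bsub>W\<^esub> \<tau>) (snd x))
      = (fst \<sigma> (fst (fst \<tau> (fst x), snd \<tau> (snd x))), snd \<sigma> (snd (fst \<tau> (fst x), snd \<tau> (snd x))))"
    by (simp add: AutoGroup_mult_apply[OF grp(1)] AutoGroup_mult_apply[OF grp(2)])
next
  fix x assume "x \<in> carrier (Np \<times>\<times> Nq)"
  then show "(fst \<one>\<^bsub>W\<^esub> (fst x), snd \<one>\<^bsub>W\<^esub> (snd x)) = x"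
    by (auto simp: DirProd_def AutoGroup_def BijGroup_def)
qed

lemma group_G: "group G"
  by (rule semidirect_product.sdprod_group[OF semidirect_product_G])

lemma carrier_G: "carrier G = carrier (Np \<times>\<times> Nq) \<times> fibre"
  by (simp add: sdprod_carrier)

lemma finite_Np: "finite (carrier Np)" and finite_Nq: "finite (carrier Nq)"
  by (intro card_ge_0_finite, simp add: Np_card Nq_card prime_gt_0_nat primes)+

lemma finite_fibre: "finite fibre"
proof -
  have "fibre \<subseteq> auto Np \<times> auto Nq"
  proof
    fix \<sigma> assume "\<sigma> \<in> fibre"
    then show "\<sigma> \<in> auto Np \<times> auto Nq" using fibre_auto[of \<sigma>] by (cases \<sigma>) simp
  qed
  moreover have "finite (auto Np \<times> auto Nq)"
    using finite_auto[OF finite_Np] finite_auto[OF finite_Nq] by (rule finite_cartesian_product)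
  ultimately show ?thesis by (rule finite_subset)
qed

lemma finite_G: "finite (carrier G)"
  using finite_Np finite_Nq finite_fibre by (simp add: carrier_G)

lemma G_components:
  assumes "g \<in> carrier G"
  shows "fst (snd g) \<in> Tp" "snd (snd g) \<in> Tq"
proof -
  have "snd g \<in> fibre" using assms by (simp add: carrier_G mem_Times_iff)
  then show "fst (snd g) \<in> Tp" "snd (snd g) \<in> Tq" unfolding fibre_def by auto
qed

lemma snd_mult_G: "fst (snd (g \<otimes>\<^bsub>G\<^esub> h)) = fst (snd g) \<otimes>\<^bsub>AP\<^esub> fst (snd h)"
    "snd (snd (g \<otimes>\<^bsub>G\<^esub> h)) = snd (snd g) \<otimes>\<^bsub>AQ\<^esub> snd (snd h)"
  by (cases g, cases h, simp add: sdprod_mult mult_DirProd')+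

lemma conj_formula:
  assumes g: "g \<in> carrier G" and x: "x \<in> carrier Np" and y: "y \<in> carrier Nq"
  shows "conj_sd G W (x, y) g = ((inv\<^bsub>AP\<^esub> fst (snd g)) x, (inv\<^bsub>AQ\<^esub> snd (snd g)) y)"
proof -
  interpret Np: comm_group Np by (fact Np_comm)
  interpret Nq: comm_group Nq by (fact Nq_comm)
  have "comm_group (Np \<times>\<times> Nq)"
    by (rule group.group_comm_groupI[OF DirProd_group[OF grp]]) (auto simp: Np.m_comm Nq.m_comm)
  then have "conj_sd G W (x, y) g = (fst (inv\<^bsub>W\<^esub> snd g) x, snd (inv\<^bsub>W\<^esub> snd g) y)"
    using semidirect_product.conj_sd_eq[OF semidirect_product_G] g x y by simp
  also have "inv\<^bsub>W\<^esub> snd g = (inv\<^bsub>AP\<^esub> fst (snd g), inv\<^bsub>AQ\<^esub> snd (snd g))"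
    using inv_W[of "fst (snd g)" "snd (snd g)"] g by (simp add: carrier_G mem_Times_iff)
  finally show ?thesis by simp
qed

lemma actp_eq: "g \<in> carrier G \<Longrightarrow> x \<in> carrier Np \<Longrightarrow> actp x g = (inv\<^bsub>AP\<^esub> fst (snd g)) x"
  using conj_formula monoid.one_closed[OF group.is_monoid[OF grp(2)]] by simp

lemma actq_eq: "g \<in> carrier G \<Longrightarrow> y \<in> carrier Nq \<Longrightarrow> actq y g = (inv\<^bsub>AQ\<^esub> snd (snd g)) y"
  using conj_formula monoid.one_closed[OF group.is_monoid[OF grp(1)]] by simp

text \<open>Conjugation is a right action; it also satisfies the left-action law of acts_on
  because it factors through the abelian group Tp.\<close>

lemma acts_on_p: "acts_on G actp (carrier Np)"
proof (rule acts_on_cong[OF group_G acts_on_inv_abelian[OF grp(1) Tp, of G "\<lambda>g. fst (snd g)"]])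
  show "fst (snd \<one>\<^bsub>G\<^esub>) = \<one>\<^bsub>AP\<^esub>" by (simp add: sdprod_one)
qed (use G_components snd_mult_G actp_eq in auto)

lemma acts_on_q: "acts_on G actq (carrier Nq)"
proof (rule acts_on_cong[OF group_G acts_on_inv_abelian[OF grp(2) Tq, of G "\<lambda>g. snd (snd g)"]])
  show "snd (snd \<one>\<^bsub>G\<^esub>) = \<one>\<^bsub>AQ\<^esub>" by (simp add: sdprod_one)
qed (use G_components snd_mult_G actq_eq in auto)

lemma fibre_in_G: "\<sigma> \<in> fibre \<Longrightarrow> (\<one>\<^bsub>Np \<times>\<times> Nq\<^esub>, \<sigma>) \<in> carrier G"
  using monoid.one_closed[OF group.is_monoid[OF DirProd_group[OF grp]]] by (simp add: carrier_G)

lemma inv_inv_Tp: "a \<in> Tp \<Longrightarrow> inv\<^bsub>AP\<^esub> (inv\<^bsub>AP\<^esub> a) = a"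
  using group.inv_inv[OF group.AutoGroup[OF grp(1)]] subgroup.mem_carrier[OF Tp(1)] by blast

lemma inv_inv_Tq: "b \<in> Tq \<Longrightarrow> inv\<^bsub>AQ\<^esub> (inv\<^bsub>AQ\<^esub> b) = b"
  using group.inv_inv[OF group.AutoGroup[OF grp(2)]] subgroup.mem_carrier[OF Tq(1)] by blast

lemma realize_p: "t \<in> Tp \<Longrightarrow> \<exists>g\<in>carrier G. \<forall>x\<in>carrier Np. actp x g = t x"
proof -
  assume t: "t \<in> Tp"
  then obtain b where b: "(inv\<^bsub>AP\<^esub> t, b) \<in> fibre"
    using fibre_fst_surj subgroup.m_inv_closed[OF Tp(1)] by blast
  show ?thesis
    using actp_eq[OF fibre_in_G[OF b]] inv_inv_Tp[OF t] by (intro bexI[OF _ fibre_in_G[OF b]]) simp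
qed

lemma realize_q: "t \<in> Tq \<Longrightarrow> \<exists>g\<in>carrier G. \<forall>y\<in>carrier Nq. actq y g = t y"
proof -
  assume t: "t \<in> Tq"
  then obtain a where a: "(a, inv\<^bsub>AQ\<^esub> t) \<in> fibre"
    using fibre_snd_surj subgroup.m_inv_closed[OF Tq(1)] by blast
  show ?thesis
    using actq_eq[OF fibre_in_G[OF a]] inv_inv_Tq[OF t] by (intro bexI[OF _ fibre_in_G[OF a]]) simp
qed

lemma orbit_p: "orbit_in actp (carrier G) np = orbit_in (\<lambda>x a. a x) Tp np"
proof
  show "orbit_in actp (carrier G) np \<subseteq> orbit_in (\<lambda>x a. a x) Tp np"
    using actp_eq n(1) G_components subgroup.m_inv_closed[OF Tp(1)] unfolding orbit_in_def by fastforce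
  show "orbit_in (\<lambda>x a. a x) Tp np \<subseteq> orbit_in actp (carrier G) np"
  proof
    fix z assume "z \<in> orbit_in (\<lambda>x a. a x) Tp np"
    then obtain t where t: "t \<in> Tp" "z = t np" unfolding orbit_in_def by blast
    obtain g where g: "g \<in> carrier G" "actp np g = t np" using realize_p[OF t(1)] n by blast
    then have "z = actp np g" using t(2) by simp
    then show "z \<in> orbit_in actp (carrier G) np" unfolding orbit_in_def using g(1) by blast
  qed
qed

lemma orbit_q: "orbit_in actq (carrier G) nq = orbit_in (\<lambda>x a. a x) Tq nq"
proof
  show "orbit_in actq (carrier G) nq \<subseteq> orbit_in (\<lambda>x a. a x) Tq nq"
    using actq_eq n(2) G_components subgroup.m_inv_closed[OF Tq(1)] unfolding orbit_in_def by fastforce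
  show "orbit_in (\<lambda>x a. a x) Tq nq \<subseteq> orbit_in actq (carrier G) nq"
  proof
    fix z assume "z \<in> orbit_in (\<lambda>x a. a x) Tq nq"
    then obtain t where t: "t \<in> Tq" "z = t nq" unfolding orbit_in_def by blast
    obtain g where g: "g \<in> carrier G" "actq nq g = t nq" using realize_q[OF t(1)] n by blast
    then have "z = actq nq g" using t(2) by simp
    then show "z \<in> orbit_in actq (carrier G) nq" unfolding orbit_in_def using g(1) by blast
  qed
qed

lemma fibre_compat: "(a, b) \<in> fibre \<Longrightarrow> fp ((inv\<^bsub>AP\<^esub> a) np) = fq (b nq)"
proof -
  assume ab: "(a, b) \<in> fibre"
  then have a: "a \<in> Tp" and b: "b \<in> Tq" and "\<alpha> (a <#\<^bsub>TP\<^esub> Kp) = b <#\<^bsub>TQ\<^esub> Kq"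
    by (auto simp: fibre_l_coset)
  moreover have "inv\<^bsub>TP\<^esub> (inv\<^bsub>AP\<^esub> a) = a"
    using group.m_inv_consistent[OF group.AutoGroup[OF grp(1)] Tp(1)] subgroup.m_inv_closed[OF Tp(1) a]
      inv_inv_Tp[OF a] by simp
  ultimately show ?thesis
    using \<alpha>_compat subgroup.m_inv_closed[OF Tp(1) a] by metis
qed

lemma compat_G: "g \<in> carrier G \<Longrightarrow> fp (actp np g) = fq (actq nq (inv\<^bsub>G\<^esub> g))"
proof -
  assume g: "g \<in> carrier G"
  then have ig: "inv\<^bsub>G\<^esub> g \<in> carrier G" by (rule group.inv_closed[OF group_G])
  have "snd (inv\<^bsub>G\<^esub> g) = inv\<^bsub>W\<^esub> (snd g)"
    using semidirect_product.sdprod_inv[OF semidirect_product_G, of "fst g" "snd g"] g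
    by (cases g) (simp add: sdprod_carrier)
  then have "snd (snd (inv\<^bsub>G\<^esub> g)) = inv\<^bsub>AQ\<^esub> (snd (snd g))"
    using inv_W[of "fst (snd g)" "snd (snd g)"] g by (simp add: carrier_G mem_Times_iff)
  then have "actq nq (inv\<^bsub>G\<^esub> g) = snd (snd g) nq"
    using actq_eq[OF ig n(2)] inv_inv_Tq G_components(2)[OF g] by simp
  moreover have "(fst (snd g), snd (snd g)) \<in> fibre" using g by (simp add: carrier_G mem_Times_iff)
  ultimately show ?thesis using fibre_compat actp_eq[OF g n(1)] by simp
qed

sublocale compatible_actions G actp "carrier Np" actq "carrier Nq" fp fq np nq
  by (rule compatible_actions.intro[OF group_G acts_on_p acts_on_q n])
    (use compat_G supp_p supp_q orbit_p orbit_q in auto)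

lemma realize_Kp: "k \<in> Kp \<Longrightarrow> \<exists>h\<in>stab_in actq (carrier G) nq. \<forall>x\<in>carrier Np. actp x h = k x"
proof -
  assume k: "k \<in> Kp"
  then have \<sigma>: "(inv\<^bsub>AP\<^esub> k, \<one>\<^bsub>AQ\<^esub>) \<in> fibre"
    using fibre_Kp subgroup.m_inv_closed[OF Kp(1)] by blast
  have "actq nq (\<one>\<^bsub>Np \<times>\<times> Nq\<^esub>, inv\<^bsub>AP\<^esub> k, \<one>\<^bsub>AQ\<^esub>) = nq"
    using actq_eq[OF fibre_in_G[OF \<sigma>] n(2)] n(2) monoid.inv_one[OF group.is_monoid[OF group.AutoGroup[OF grp(2)]]]
    by (simp add: AutoGroup_one_apply)
  moreover have "\<forall>x\<in>carrier Np. actp x (\<one>\<^bsub>Np \<times>\<times> Nq\<^esub>, inv\<^bsub>AP\<^esub> k, \<one>\<^bsub>AQ\<^esub>) = k x"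
    using actp_eq[OF fibre_in_G[OF \<sigma>]] inv_inv_Tp k Kp(2) by auto
  ultimately show ?thesis using fibre_in_G[OF \<sigma>] unfolding stab_in_def by blast
qed

lemma realize_Kq: "k \<in> Kq \<Longrightarrow> \<exists>h\<in>stab_in actp (carrier G) np. \<forall>y\<in>carrier Nq. actq y h = k y"
proof -
  assume k: "k \<in> Kq"
  then have \<sigma>: "(\<one>\<^bsub>AP\<^esub>, inv\<^bsub>AQ\<^esub> k) \<in> fibre"
    using fibre_Kq subgroup.m_inv_closed[OF Kq(1)] by blast
  have "actp np (\<one>\<^bsub>Np \<times>\<times> Nq\<^esub>, \<one>\<^bsub>AP\<^esub>, inv\<^bsub>AQ\<^esub> k) = np"
    using actp_eq[OF fibre_in_G[OF \<sigma>] n(1)] n(1) monoid.inv_one[OF group.is_monoid[OF group.AutoGroup[OF grp(1)]]]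
    by (simp add: AutoGroup_one_apply)
  moreover have "\<forall>y\<in>carrier Nq. actq y (\<one>\<^bsub>Np \<times>\<times> Nq\<^esub>, \<one>\<^bsub>AP\<^esub>, inv\<^bsub>AQ\<^esub> k) = k y"
    using actq_eq[OF fibre_in_G[OF \<sigma>]] inv_inv_Tq k Kq(2) by auto
  ultimately show ?thesis using fibre_in_G[OF \<sigma>] unfolding stab_in_def by blast
qed

lemma finite_stab: "finite (stab_in act (carrier G) z)"
  using finite_G unfolding stab_in_def by simp

lemma in_E_p: "in_E G actp (stab_in actq (carrier G) nq) Np fp"
proof (rule E_transfer.in_E[OF E_transfer.intro[OF grp(1) primes(1) Np_exp Np_card Tp Kp fpE n(1) supp_p
      group_G stab_in_subgroup[OF group_G acts_on_q n(2)] finite_stab acts_on_p]])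
  show "\<forall>h\<in>stab_in actq (carrier G) nq. \<exists>t\<in>Tp. \<forall>x\<in>carrier Np. actp x h = t x"
    using actp_eq G_components subgroup.m_inv_closed[OF Tp(1)] unfolding stab_in_def by blast
qed (use realize_p realize_Kp fp_stab_invariant in blast)+

lemma in_E_q: "in_E G actq (stab_in actp (carrier G) np) Nq fq"
proof (rule E_transfer.in_E[OF E_transfer.intro[OF grp(2) primes(2) Nq_exp Nq_card Tq Kq fqE n(2) supp_q
      group_G stab_in_subgroup[OF group_G acts_on_p n(1)] finite_stab acts_on_q]])
  show "\<forall>h\<in>stab_in actp (carrier G) np. \<exists>t\<in>Tq. \<forall>y\<in>carrier Nq. actq y h = t y"
    using actq_eq G_components subgroup.m_inv_closed[OF Tq(1)] unfolding stab_in_def by blast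
qed (use realize_q realize_Kq swap.fp_stab_invariant in blast)+

lemma glued_properties:
  "(\<forall>x \<in> carrier (Np \<times>\<times> Nq). \<forall>g \<in> carrier G. \<forall>g' \<in> carrier G.
      nq = actq (snd x) g \<and> nq = actq (snd x) g' \<longrightarrow> fp (actp (fst x) g) = fp (actp (fst x) g'))
   \<and> (\<forall>x \<in> carrier (Np \<times>\<times> Nq). (fst x \<notin> orbit_in actp (carrier G) np \<longrightarrow> glued x = 0)
      \<and> (\<forall>g \<in> carrier G. np = actp (fst x) g \<longrightarrow> glued x = fq (actq (snd x) g)))"
proof (intro conjI ballI impI)
  fix x g g' assume "x \<in> carrier (Np \<times>\<times> Nq)" "g \<in> carrier G" "g' \<in> carrier G"
    "nq = actq (snd x) g \<and> nq = actq (snd x) g'"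
  then show "fp (actp (fst x) g) = fp (actp (fst x) g')"
    using glued_well_defined[of "fst x" "snd x" g g'] by (auto simp: carrier_DirProd mem_Times_iff)
next
  fix x assume "x \<in> carrier (Np \<times>\<times> Nq)" "fst x \<notin> orbit_in actp (carrier G) np"
  then show "glued x = 0"
    using glued_eq_zero[of "fst x" "snd x"] by (simp add: carrier_DirProd mem_Times_iff)
next
  fix x g assume "x \<in> carrier (Np \<times>\<times> Nq)" "g \<in> carrier G" "np = actp (fst x) g"
  then show "glued x = fq (actq (snd x) g)"
    using glued_eq[of "fst x" "snd x" g] by (simp add: carrier_DirProd mem_Times_iff)
qed

end

theorem mainTheorem12:
  fixes p q :: nat
    and Np :: "'a monoid" and Nq :: "'b monoid"
    and Tp Kp :: "('a \<Rightarrow> 'a) set" and Tq Kq :: "('b \<Rightarrow> 'b) set"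
    and fp :: "'a \<Rightarrow> int" and fq :: "'b \<Rightarrow> int"
    and np :: 'a and nq :: 'b
    and \<alpha> :: "('a \<Rightarrow> 'a) set \<Rightarrow> ('b \<Rightarrow> 'b) set"
    and \<Gamma> :: "(('a \<Rightarrow> 'a) \<times> ('b \<Rightarrow> 'b)) set"
    and N :: "('a \<times> 'b) monoid"
    and G :: "(('a \<times> 'b) \<times> (('a \<Rightarrow> 'a) \<times> ('b \<Rightarrow> 'b))) monoid"
    and actp :: "'a \<Rightarrow> ('a \<times> 'b) \<times> (('a \<Rightarrow> 'a) \<times> ('b \<Rightarrow> 'b)) \<Rightarrow> 'a"
    and actq :: "'b \<Rightarrow> ('a \<times> 'b) \<times> (('a \<Rightarrow> 'a) \<times> ('b \<Rightarrow> 'b)) \<Rightarrow> 'b"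
    and \<epsilon> :: "'a \<times> 'b \<Rightarrow> int"
  assumes primes: "Factorial_Ring.prime p" "Factorial_Ring.prime q" "p \<noteq> q"
    and grp: "group Np" "group Nq"
    and Np_iso: "Np \<cong> integer_mod_group p \<times>\<times> integer_mod_group p"
    and Nq_iso: "Nq \<cong> integer_mod_group q \<times>\<times> integer_mod_group q"
    and Tp: "subgroup Tp (AutoGroup Np)" "\<forall>a\<in>Tp. \<forall>b\<in>Tp. a \<otimes>\<^bsub>AutoGroup Np\<^esub> b = b \<otimes>\<^bsub>AutoGroup Np\<^esub> a"
    and Tq: "subgroup Tq (AutoGroup Nq)" "\<forall>a\<in>Tq. \<forall>b\<in>Tq. a \<otimes>\<^bsub>AutoGroup Nq\<^esub> b = b \<otimes>\<^bsub>AutoGroup Nq\<^esub> a"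
    and Kp: "subgroup Kp (AutoGroup Np)" "Kp \<subseteq> Tp"
    and Kq: "subgroup Kq (AutoGroup Nq)" "Kq \<subseteq> Tq"
    and fpE: "in_E (AutoGroup Np) (\<lambda>x a. a x) Kp Np fp"
    and fqE: "in_E (AutoGroup Nq) (\<lambda>x a. a x) Kq Nq fq"
    and n: "np \<in> carrier Np" "nq \<in> carrier Nq" "fp np = fq nq" "fp np \<noteq> 0"
    and vanp: "\<forall>x \<in> carrier Np. x \<notin> orbit_in (\<lambda>x a. a x) Tp np \<longrightarrow> fp x = 0"
    and vanq: "\<forall>y \<in> carrier Nq. y \<notin> orbit_in (\<lambda>y b. b y) Tq nq \<longrightarrow> fq y = 0"
    and \<alpha>_iso: "\<alpha> \<in> iso ((AutoGroup Np)\<lparr>carrier := Tp\<rparr> Mod Kp) ((AutoGroup Nq)\<lparr>carrier := Tq\<rparr> Mod Kq)"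
    and \<alpha>_compat: "\<forall>a \<in> Tp. \<forall>b \<in> Tq.
        b <#\<^bsub>(AutoGroup Nq)\<lparr>carrier := Tq\<rparr>\<^esub> Kq
          = \<alpha> (inv\<^bsub>(AutoGroup Np)\<lparr>carrier := Tp\<rparr>\<^esub> a <#\<^bsub>(AutoGroup Np)\<lparr>carrier := Tp\<rparr>\<^esub> Kp)
        \<longrightarrow> fp (a np) = fq (b nq)"
  defines "\<Gamma> \<equiv> {\<sigma> \<in> Tp \<times> Tq.
        \<alpha> (Kp #>\<^bsub>(AutoGroup Np)\<lparr>carrier := Tp\<rparr>\<^esub> fst \<sigma>) = Kq #>\<^bsub>(AutoGroup Nq)\<lparr>carrier := Tq\<rparr>\<^esub> snd \<sigma>}"
    and "N \<equiv> Np \<times>\<times> Nq"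
    and "G \<equiv> sdprod N ((AutoGroup Np \<times>\<times> AutoGroup Nq)\<lparr>carrier := \<Gamma>\<rparr>)
                 (\<lambda>\<sigma> x. (fst \<sigma> (fst x), snd \<sigma> (snd x)))"
    and "actp \<equiv> (\<lambda>x g. fst (conj_sd G ((AutoGroup Np \<times>\<times> AutoGroup Nq)\<lparr>carrier := \<Gamma>\<rparr>) (x, \<one>\<^bsub>Nq\<^esub>) g))"
    and "actq \<equiv> (\<lambda>y g. snd (conj_sd G ((AutoGroup Np \<times>\<times> AutoGroup Nq)\<lparr>carrier := \<Gamma>\<rparr>) (\<one>\<^bsub>Np\<^esub>, y) g))"
    and "\<epsilon> \<equiv> (\<lambda>x. if snd x \<notin> orbit_in actq (carrier G) nq then 0
                 else fp (actp (fst x) (SOME g. g \<in> carrier G \<and> nq = actq (snd x) g)))"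
  shows "(\<forall>x \<in> carrier N. \<forall>g \<in> carrier G. \<forall>g' \<in> carrier G.
            nq = actq (snd x) g \<and> nq = actq (snd x) g' \<longrightarrow> fp (actp (fst x) g) = fp (actp (fst x) g'))
       \<and> in_E G actp (stab_in actq (carrier G) nq) Np fp
       \<and> in_E G actq (stab_in actp (carrier G) np) Nq fq
       \<and> (\<forall>x \<in> carrier N. (fst x \<notin> orbit_in actp (carrier G) np \<longrightarrow> \<epsilon> x = 0)
            \<and> (\<forall>g \<in> carrier G. np = actp (fst x) g \<longrightarrow> \<epsilon> x = fq (actq (snd x) g)))"
proof -
  interpret gluing p q Np Nq Tp Kp Tq Kq fp fq np nq \<alpha>
    by (rule gluing.intro[OF assms(1,2,4-19,22-25)])
  have \<Gamma>: "\<Gamma> = fibre" by (simp add: assms(26) fibre_def)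
  have \<epsilon>: "\<epsilon> = glued" by (rule ext) (simp add: assms(27-31) \<Gamma> glued_def)
  show ?thesis
    unfolding assms(27-30) \<Gamma> \<epsilon> using glued_properties in_E_p in_E_q by blast
qed

end
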